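(* Let $\varepsilon>0$, $\Omega\subset\mathbb{R}^2$ bounded open, $u\in\mathcal{SF}_\varepsilon(\Omega)$, $R\in\mathcal{R}_\varepsilon(u)$, and let $S_R(u)\subseteq\mathbb{S}^2$ be an admissible interpolation surface for $u$ in $R$. Then $S_R(u)$ is either a semi great-circle, or an arc of geodesic, or a geodesic triangle, or the union of two adjacent geodesic triangles, or a hemisphere.
   Context: $\mathcal{L}=\{ae_1+b\hat e_2:a,b\in\mathbb{Z}\}$ with $e_1=(1,0)$, $\hat e_2=\frac12(1,\sqrt3)$, $\mathcal{L}_\varepsilon=\varepsilon\mathcal{L}$, $\mathcal{L}_\varepsilon(R)=\mathcal{L}_\varepsilon\cap R$; $\mathcal{T}_\varepsilon$ is the set of closed triangles with vertices in $\mathcal{L}_\varepsilon$ pairwise at distance $\varepsilon$; $\mathcal{E}_\varepsilon$ the set of segments $[i,j]$, $i,j\in\mathcal{L}_\varepsilon$, $|i-j|=\varepsilon$. $n=(0,0,1)$; $\mathcal{SF}_\varepsilon(\Omega)$ is the set of $u:\mathcal{L}_\varepsilon\to\mathbb{S}^2$ with $u=n$ on $\mathcal{L}_\varepsilon\setminus\Omega$. $\mathcal{N}_\varepsilon(u)=\{[i,j]\in\mathcal{E}_\varepsilon:u(i)=-u(j)\}$. Two triangles of $\mathcal{T}_\varepsilon$ are neighbours if their intersection is an edge in $\mathcal{N}_\varepsilon(u)$, connected if joined by a finite chain of neighbours; $\mathcal{R}_\varepsilon(u)$ is the set of unions of pairwise connected triangles maximal under inclusion. $\mathrm{cone}_R(u)=\{\sum_{w\in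 u(\mathcal{L}_\varepsilon(R))}\lambda_ww:\lambda_w\ge0\}$. $S_R(u)$ is an admissible interpolation surface for $u$ in $R$ if: when $\mathrm{cone}_R(u)$ is not a linear subspace of $\mathbb{R}^3$, $S_R(u)=\{v/|v|: v=\sum_w\lambda_ww,\ \lambda_w\ge0,\ \sum_w\lambda_w>0\}$; when it is a linear subspace, $S_R(u)=\{v/|v|:v=\sum_w\lambda_ww+\tau h,\ \lambda_w,\tau\ge0,\ \sum_w\lambda_w+\tau>0\}$ for some $h\in\mathbb{S}^2$ orthogonal to $\mathrm{cone}_R(u)$ (sums over $w\in u(\mathcal{L}_\varepsilon(R))$). A geodesic triangle with linearly independent vertices $p_1,p_2,p_3\in\mathbb{S}^2$ is $\{\sum\lambda_ip_i/|\sum\lambda_ip_i|:\lambda_i>0\}$; a hemisphere is a set $\{q\in\mathbb{S}^2:q\cdot h>0\}$ (possibly with its boundary great circle). *)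

theory Defs
  imports "HOL-Analysis.Analysis"
begin

definition e1 :: "real^2" where "e1 = vector [1, 0]"
definition e2h :: "real^2" where "e2h = vector [1/2, sqrt 3 / 2]"

definition lattice :: "real \<Rightarrow> (real^2) set" where
  "lattice \<epsilon> = {\<epsilon> *\<^sub>R (of_int a *\<^sub>R e1 + of_int b *\<^sub>R e2h) | a b :: int. True}"

definition lattice_in :: "real \<Rightarrow> (real^2) set \<Rightarrow> (real^2) set" where
  "lattice_in \<epsilon> R = lattice \<epsilon> \<inter> R"

definition triangles :: "real \<Rightarrow> (real^2) set set" where
  "triangles \<epsilon> = {convex hull {i, j, k} | i j k.
      i \<in> lattice \<epsilon> \<and> j \<in> lattice \<epsilon> \<and> k \<in> lattice \<epsilon> \<and>
      dist i j = \<epsilon> \<and> dist j k = \<epsilon> \<and> dist i k = \<epsilon>}"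

definition edges :: "real \<Rightarrow> (real^2) set set" where
  "edges \<epsilon> = {closed_segment i j | i j. i \<in> lattice \<epsilon> \<and> j \<in> lattice \<epsilon> \<and> dist i j = \<epsilon>}"

definition north :: "real^3" where "north = vector [0, 0, 1]"

text \<open>Spin fields: only the values on the lattice matter.\<close>
definition SF :: "real \<Rightarrow> (real^2) set \<Rightarrow> ((real^2) \<Rightarrow> real^3) set" where
  "SF \<epsilon> \<Omega> = {u. (\<forall>i\<in>lattice \<epsilon>. u i \<in> sphere 0 1) \<and> (\<forall>i\<in>lattice \<epsilon> - \<Omega>. u i = north)}"

definition Nedges :: "real \<Rightarrow> ((real^2) \<Rightarrow> real^3) \<Rightarrow> (real^2) set set" where
  "Nedges \<epsilon> u = {closed_segment i j | i j.
      i \<in> lattice \<epsilon> \<and> j \<in> lattice \<epsilon> \<and> dist i j = \<epsilon> \<and> u i = - u j}"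

definition neighbours :: "real \<Rightarrow> ((real^2) \<Rightarrow> real^3) \<Rightarrow> (real^2) set \<Rightarrow> (real^2) set \<Rightarrow> bool" where
  "neighbours \<epsilon> u T T' \<longleftrightarrow> T \<in> triangles \<epsilon> \<and> T' \<in> triangles \<epsilon> \<and> T \<inter> T' \<in> Nedges \<epsilon> u"

definition tri_connected :: "real \<Rightarrow> ((real^2) \<Rightarrow> real^3) \<Rightarrow> (real^2) set \<Rightarrow> (real^2) set \<Rightarrow> bool" where
  "tri_connected \<epsilon> u T T' \<longleftrightarrow> T \<in> triangles \<epsilon> \<and> T' \<in> triangles \<epsilon> \<and> (neighbours \<epsilon> u)\<^sup>*\<^sup>* T T'"

definition pairwise_tri_connected :: "real \<Rightarrow> ((real^2) \<Rightarrow> real^3) \<Rightarrow> (real^2) set set \<Rightarrow> bool" where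
  "pairwise_tri_connected \<epsilon> u F \<longleftrightarrow> F \<subseteq> triangles \<epsilon> \<and> (\<forall>T\<in>F. \<forall>T'\<in>F. tri_connected \<epsilon> u T T')"

definition regions :: "real \<Rightarrow> ((real^2) \<Rightarrow> real^3) \<Rightarrow> (real^2) set set" where
  "regions \<epsilon> u = {\<Union>F | F. F \<noteq> {} \<and> pairwise_tri_connected \<epsilon> u F \<and>
      (\<forall>F'. pairwise_tri_connected \<epsilon> u F' \<and> \<Union>F \<subseteq> \<Union>F' \<longrightarrow> \<Union>F' = \<Union>F)}"

definition coneR :: "real \<Rightarrow> ((real^2) \<Rightarrow> real^3) \<Rightarrow> (real^2) set \<Rightarrow> (real^3) set" where
  "coneR \<epsilon> u R = (let W = u ` lattice_in \<epsilon> R in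
      {(\<Sum>w\<in>W. l w *\<^sub>R w) | l. \<forall>w\<in>W. l w \<ge> 0})"

definition admissible_surface ::
  "real \<Rightarrow> ((real^2) \<Rightarrow> real^3) \<Rightarrow> (real^2) set \<Rightarrow> (real^3) set \<Rightarrow> bool" where
  "admissible_surface \<epsilon> u R S \<longleftrightarrow>
    (let W = u ` lattice_in \<epsilon> R; C = coneR \<epsilon> u R in
     if \<not> subspace C then
       S = {inverse (norm v) *\<^sub>R v | v. v \<noteq> 0 \<and> (\<exists>l. (\<forall>w\<in>W. l w \<ge> 0) \<and>
              (\<Sum>w\<in>W. l w) > 0 \<and> v = (\<Sum>w\<in>W. l w *\<^sub>R w))}
     else
       (\<exists>h. norm h = 1 \<and> (\<forall>c\<in>C. h \<bullet> c = 0) \<and>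
          S = {inverse (norm v) *\<^sub>R v | v. v \<noteq> 0 \<and> (\<exists>l \<tau>. (\<forall>w\<in>W. l w \<ge> 0) \<and> \<tau> \<ge> 0 \<and>
              (\<Sum>w\<in>W. l w) + \<tau> > 0 \<and> v = (\<Sum>w\<in>W. l w *\<^sub>R w) + \<tau> *\<^sub>R h)}))"

definition semi_great_circle :: "(real^3) set \<Rightarrow> bool" where
  "semi_great_circle S \<longleftrightarrow> (\<exists>p q. norm p = 1 \<and> norm q = 1 \<and> p \<bullet> q = 0 \<and>
      S = {cos t *\<^sub>R p + sin t *\<^sub>R q | t. 0 \<le> t \<and> t \<le> pi})"

text \<open>Closed geodesic arc between non-antipodal points (degenerate arc p = q allowed).\<close>
definition geodesic_arc :: "(real^3) set \<Rightarrow> bool" where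
  "geodesic_arc S \<longleftrightarrow> (\<exists>p q. norm p = 1 \<and> norm q = 1 \<and> p \<noteq> - q \<and>
      S = {inverse (norm v) *\<^sub>R v | v. \<exists>t. 0 \<le> t \<and> t \<le> 1 \<and> v = (1 - t) *\<^sub>R p + t *\<^sub>R q})"

definition geo_tri :: "real^3 \<Rightarrow> real^3 \<Rightarrow> real^3 \<Rightarrow> (real^3) set" where
  "geo_tri p1 p2 p3 = {inverse (norm v) *\<^sub>R v | v. \<exists>a b c. a \<ge> 0 \<and> b \<ge> 0 \<and> c \<ge> 0 \<and>
      a + b + c > 0 \<and> v = a *\<^sub>R p1 + b *\<^sub>R p2 + c *\<^sub>R p3}"

definition sph_indep :: "real^3 \<Rightarrow> real^3 \<Rightarrow> real^3 \<Rightarrow> bool" where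
  "sph_indep p1 p2 p3 \<longleftrightarrow> norm p1 = 1 \<and> norm p2 = 1 \<and> norm p3 = 1 \<and>
      p1 \<noteq> p2 \<and> p1 \<noteq> p3 \<and> p2 \<noteq> p3 \<and> independent {p1, p2, p3}"

definition geodesic_triangle :: "(real^3) set \<Rightarrow> bool" where
  "geodesic_triangle S \<longleftrightarrow> (\<exists>p1 p2 p3. sph_indep p1 p2 p3 \<and> S = geo_tri p1 p2 p3)"

definition two_adjacent_geodesic_triangles :: "(real^3) set \<Rightarrow> bool" where
  "two_adjacent_geodesic_triangles S \<longleftrightarrow> (\<exists>p1 p2 p3 p4 n.
      sph_indep p1 p2 p3 \<and> sph_indep p1 p2 p4 \<and>
      n \<bullet> p1 = 0 \<and> n \<bullet> p2 = 0 \<and> n \<bullet> p3 > 0 \<and> n \<bullet> p4 < 0 \<and>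
      S = geo_tri p1 p2 p3 \<union> geo_tri p1 p2 p4)"

definition hemisphere :: "(real^3) set \<Rightarrow> bool" where
  "hemisphere S \<longleftrightarrow> (\<exists>h. norm h = 1 \<and>
      (S = {q \<in> sphere 0 1. q \<bullet> h > 0} \<or> S = {q \<in> sphere 0 1. q \<bullet> h \<ge> 0}))"

end

theory Submission
  imports Defs "HOL-Analysis.Cross3"
begin

text \<open>
  A region is either a single lattice triangle, whose only lattice points are its three
  vertices, or it contains an edge of \<open>\<N>\<^sub>\<epsilon>(u)\<close>, so that \<open>u\<close> takes two antipodal values
  \<open>p\<close> and \<open>-p\<close> on it. The surface \<open>S\<^sub>R(u)\<close> is the radial projection of the convex cone
  \<open>C\<close> generated by the values of \<open>u\<close> (extended by a normal ray when \<open>C\<close> is a subspace).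

  A subspace \<open>C\<close> admitting a unit normal has dimension at most 2 and yields a point,
  a semi great-circle or a hemisphere. Three pairwise non-antipodal unit vectors generate
  either a simplicial cone (a geodesic triangle) or, being coplanar, the cone of two of
  them (an arc). If \<open>C\<close> contains the line \<open>\<real>p\<close> but is not a subspace, it lies in a
  half-space \<open>n \<bullet> x \<ge> 0\<close> with \<open>n \<bottom> p\<close>; projecting the generators to the plane
  orthogonal to \<open>p\<close>, their polar angles lie in \<open>[0, \<pi>]\<close>, and the extreme angles
  determine \<open>C\<close>: a half-plane (semi great-circle), a wedge of opening less than \<open>\<pi>\<close>
  (two geodesic triangles glued along the arc from the extreme generators) or a half-space
  (hemisphere).
\<close>

section \<open>Lattice triangles and regions\<close>

lemma inner_e1_e2h: "e1 \<bullet> e1 = 1" "e2h \<bullet> e2h = 1" "e1 \<bullet> e2h = 1/2"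
  by (auto simp: e1_def e2h_def inner_vec_def sum_2 power2_eq_square)

lemma int_quadratic_form_ge_1:
  fixes a b :: int
  assumes "(a, b) \<noteq> (0, 0)"
  shows "a*a + a*b + b*b \<ge> 1"
proof -
  have "a*a + b*b \<ge> 1"
    using assms by (smt (verit) mult_le_0_iff zero_le_square)
  moreover have "2*(a*a + a*b + b*b) = a*a + b*b + (a+b)*(a+b)"
    by (simp add: algebra_simps)
  ultimately show ?thesis
    by (smt (verit) zero_le_square)
qed

lemma lattice_dist_ge:
  assumes "\<epsilon> > 0" "x \<in> lattice \<epsilon>" "y \<in> lattice \<epsilon>" "x \<noteq> y"
  shows "dist x y \<ge> \<epsilon>"
proof -
  obtain a b c d :: int where
    x: "x = \<epsilon> *\<^sub>R (of_int a *\<^sub>R e1 + of_int b *\<^sub>R e2h)" and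
    y: "y = \<epsilon> *\<^sub>R (of_int c *\<^sub>R e1 + of_int d *\<^sub>R e2h)"
    using assms(2,3) by (auto simp: lattice_def)
  define v where "v = of_int (a - c) *\<^sub>R e1 + of_int (b - d) *\<^sub>R e2h"
  have "(a - c, b - d) \<noteq> (0, 0)"
    using assms(4) by (auto simp: x y)
  then have "1 \<le> real_of_int ((a-c)*(a-c) + (a-c)*(b-d) + (b-d)*(b-d))"
    using int_quadratic_form_ge_1 by (metis of_int_1 of_int_le_iff)
  also have "\<dots> = v \<bullet> v"
    by (simp add: v_def inner_e1_e2h inner_commute algebra_simps)
  finally have "1 \<le> norm v"
    by (metis norm_eq_sqrt_inner real_sqrt_ge_one)
  moreover have "x - y = \<epsilon> *\<^sub>R v"
    by (simp add: x y v_def algebra_simps)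
  then have "dist x y = \<epsilon> * norm v"
    using assms(1) by (simp add: dist_norm)
  ultimately show ?thesis
    using assms(1) by (metis mult_le_cancel_left1 order.strict_iff_not)
qed

lemma inner_equilateral_combination:
  fixes i j k :: "'a::real_inner"
  assumes "dist i j = \<epsilon>" "dist j k = \<epsilon>" "dist i k = \<epsilon>"
  shows "(b *\<^sub>R (j - i) + c *\<^sub>R (k - i)) \<bullet> (b *\<^sub>R (j - i) + c *\<^sub>R (k - i)) = \<epsilon>\<^sup>2 * (b*b + b*c + c*c)"
proof -
  define s t where "s = j - i" and "t = k - i"
  have "s \<bullet> s = \<epsilon>\<^sup>2" "t \<bullet> t = \<epsilon>\<^sup>2" "(t - s) \<bullet> (t - s) = \<epsilon>\<^sup>2"
    using assms by (simp_all add: s_def t_def dist_norm power2_norm_eq_inner[symmetric] norm_minus_commute)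
  then have "s \<bullet> t = \<epsilon>\<^sup>2 / 2"
    by (simp add: inner_diff_left inner_diff_right inner_commute)
  then show ?thesis
    using \<open>s \<bullet> s = \<epsilon>\<^sup>2\<close> \<open>t \<bullet> t = \<epsilon>\<^sup>2\<close>
    by (simp flip: s_def t_def) (simp add: inner_commute algebra_simps)
qed

lemma vertex_if_quadratic_form_ge_1:
  fixes b c :: real
  assumes "b \<ge> 0" "c \<ge> 0" "b + c \<le> 1" "1 \<le> b*b + b*c + c*c"
  shows "(b = 1 \<and> c = 0) \<or> (b = 0 \<and> c = 1)"
proof -
  have "(b + c) * (b + c) \<le> b + c"
    using assms(1-3) by (intro mult_left_le) simp_all
  then have "b*b + b*c + c*c + b*c \<le> b + c"
    by (simp add: algebra_simps)
  moreover have "b * c \<ge> 0"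
    using assms(1,2) by simp
  ultimately have "b * c = 0" "b + c = 1"
    using assms(3,4) by linarith+
  then show ?thesis
    by auto
qed

lemma lattice_inter_lattice_triangle:
  assumes "\<epsilon> > 0" "i \<in> lattice \<epsilon>" "j \<in> lattice \<epsilon>" "k \<in> lattice \<epsilon>"
    "dist i j = \<epsilon>" "dist j k = \<epsilon>" "dist i k = \<epsilon>"
  shows "lattice \<epsilon> \<inter> convex hull {i, j, k} = {i, j, k}"
proof (intro equalityI subsetI)
  fix x assume x: "x \<in> lattice \<epsilon> \<inter> convex hull {i, j, k}"
  show "x \<in> {i, j, k}"
  proof (rule ccontr)
    assume "x \<notin> {i, j, k}"
    obtain a b c where "a \<ge> 0" "b \<ge> 0" "c \<ge> 0" "a + b + c = 1"
      and "x = a *\<^sub>R i + b *\<^sub>R j + c *\<^sub>R k"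
      using x by (auto simp: convex_hull_3)
    then have bc: "b \<ge> 0" "c \<ge> 0" "b + c \<le> 1"
      and xi: "x - i = b *\<^sub>R (j - i) + c *\<^sub>R (k - i)"
      by (auto simp: algebra_simps simp flip: scaleR_add_left)
    have "\<epsilon>\<^sup>2 \<le> (x - i) \<bullet> (x - i)"
      using lattice_dist_ge[OF assms(1), of x i] x assms(1,2) \<open>x \<notin> {i, j, k}\<close>
      by (simp add: dist_norm power2_norm_eq_inner[symmetric] power_mono)
    then have "1 \<le> b*b + b*c + c*c"
      using assms(1) inner_equilateral_combination[OF assms(5-7), of b c] by (simp add: xi)
    then have "x = j \<or> x = k"
      using vertex_if_quadratic_form_ge_1[OF bc] xi by (auto simp: algebra_simps)
    then show False
      using \<open>x \<notin> {i, j, k}\<close> by blast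
  qed
qed (use assms in \<open>auto intro: hull_inc\<close>)

lemma region_values_antipodal_or_three:
  assumes "\<epsilon> > 0" "R \<in> regions \<epsilon> u"
  shows "(\<exists>p. p \<in> u ` lattice_in \<epsilon> R \<and> - p \<in> u ` lattice_in \<epsilon> R) \<or>
         (\<exists>a b c. u ` lattice_in \<epsilon> R = {a, b, c})"
proof -
  obtain F where R: "R = \<Union>F" and "F \<noteq> {}" and F: "pairwise_tri_connected \<epsilon> u F"
    using assms(2) unfolding regions_def by blast
  then obtain T where T: "T \<in> F" by blast
  show ?thesis
  proof (cases "F = {T}")
    case False
    then obtain T' where "T' \<in> F" "T' \<noteq> T"
      using T by blast
    then have "(neighbours \<epsilon> u)\<^sup>*\<^sup>* T T'"
      using F T unfolding pairwise_tri_connected_def tri_connected_def by blast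
    then obtain T1 where "neighbours \<epsilon> u T T1"
      using \<open>T' \<noteq> T\<close> by (metis converse_rtranclpE)
    then obtain i j where ij: "T \<inter> T1 = closed_segment i j" "i \<in> lattice \<epsilon>" "j \<in> lattice \<epsilon>" "u i = - u j"
      unfolding neighbours_def Nedges_def by blast
    then have "i \<in> lattice_in \<epsilon> R" "j \<in> lattice_in \<epsilon> R"
      using T R by (auto simp: lattice_in_def)
    then show ?thesis
      using ij(4) by (metis image_eqI)
  next
    case True
    have "T \<in> triangles \<epsilon>"
      using F T unfolding pairwise_tri_connected_def by blast
    then obtain i j k where "T = convex hull {i, j, k}" "i \<in> lattice \<epsilon>" "j \<in> lattice \<epsilon>" "k \<in> lattice \<epsilon>"
      "dist i j = \<epsilon>" "dist j k = \<epsilon>" "dist i k = \<epsilon>"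
      unfolding triangles_def by blast
    then have "lattice_in \<epsilon> R = {i, j, k}"
      using lattice_inter_lattice_triangle[OF assms(1)] True R by (simp add: lattice_in_def)
    then have "u ` lattice_in \<epsilon> R = {u i, u j, u k}"
      by simp
    then show ?thesis
      by blast
  qed
qed

section \<open>Finitely generated convex cones\<close>

lemma convex_coneI:
  assumes "0 \<in> S" "\<And>x y. x \<in> S \<Longrightarrow> y \<in> S \<Longrightarrow> x + y \<in> S"
    "\<And>x c. x \<in> S \<Longrightarrow> c \<ge> 0 \<Longrightarrow> c *\<^sub>R x \<in> S"
  shows "convex_cone S"
  using assms by (simp add: convex_cone_iff)

lemma nonneg_combination_mem_convex_cone_hull:
  fixes W :: "'a::real_vector set"
  assumes "finite W" "\<forall>w\<in>W. l w \<ge> 0"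
  shows "(\<Sum>w\<in>W. l w *\<^sub>R w) \<in> convex_cone hull W"
proof -
  have "(\<Sum>w\<in>A. l w *\<^sub>R w) \<in> convex_cone hull W" if "A \<subseteq> W" for A
    using finite_subset[OF that assms(1)] that
  proof (induction A rule: finite_induct)
    case empty
    then show ?case
      by (simp add: convex_cone_hull_contains_0)
  next
    case (insert v A)
    then have "l v *\<^sub>R v \<in> convex_cone hull W"
      using assms(2) by (simp add: convex_cone_hull_mul hull_inc)
    then show ?case
      using insert by (simp add: convex_cone_hull_add)
  qed
  then show ?thesis
    by blast
qed

lemma convex_cone_nonneg_combinations:
  "convex_cone {(\<Sum>w\<in>W. l w *\<^sub>R w) | l. \<forall>w\<in>W. l w \<ge> 0}" (is "convex_cone ?K")
proof (rule convex_coneI)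
  show "0 \<in> ?K"
    by (rule CollectI, rule exI[of _ "\<lambda>_. 0"]) simp
  fix x y assume "x \<in> ?K" "y \<in> ?K"
  then obtain l1 l2 where "\<forall>w\<in>W. l1 w \<ge> 0" "x = (\<Sum>w\<in>W. l1 w *\<^sub>R w)"
    "\<forall>w\<in>W. l2 w \<ge> 0" "y = (\<Sum>w\<in>W. l2 w *\<^sub>R w)"
    by blast
  then show "x + y \<in> ?K"
    by (intro CollectI exI[of _ "\<lambda>w. l1 w + l2 w"]) (auto simp: scaleR_add_left sum.distrib)
next
  fix x and c :: real assume "x \<in> ?K" "c \<ge> 0"
  then obtain l where "\<forall>w\<in>W. l w \<ge> 0" "x = (\<Sum>w\<in>W. l w *\<^sub>R w)"
    by blast
  then show "c *\<^sub>R x \<in> ?K"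
    using \<open>c \<ge> 0\<close> by (intro CollectI exI[of _ "\<lambda>w. c * l w"]) (auto simp: scaleR_sum_right)
qed

lemma nonneg_combinations_eq_convex_cone_hull:
  fixes W :: "'a::real_vector set"
  assumes "finite W"
  shows "{(\<Sum>w\<in>W. l w *\<^sub>R w) | l. \<forall>w\<in>W. l w \<ge> 0} = convex_cone hull W"
    (is "?K = _")
proof
  show "?K \<subseteq> convex_cone hull W"
    using nonneg_combination_mem_convex_cone_hull[OF assms] by blast
  have "W \<subseteq> ?K"
  proof
    fix v assume "v \<in> W"
    have "(\<Sum>w\<in>W. (if w = v then 1 else 0) *\<^sub>R w) = (\<Sum>w\<in>W. if w = v then v else 0)"
      by (rule sum.cong) auto
    also have "\<dots> = v"
      using assms \<open>v \<in> W\<close> by simp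
    finally show "v \<in> ?K"
      by (intro CollectI exI[of _ "\<lambda>w. if w = v then 1 else 0"]) auto
  qed
  then show "convex_cone hull W \<subseteq> ?K"
    by (rule hull_minimal) (rule convex_cone_nonneg_combinations)
qed

lemma convex_cone_ray_sums:
  assumes "convex_cone K"
  shows "convex_cone {a *\<^sub>R x + y | a y. a \<ge> 0 \<and> y \<in> K}" (is "convex_cone ?K")
proof (rule convex_coneI)
  show "0 \<in> ?K"
    using convex_cone_contains_0[OF assms] by force
  fix u v assume "u \<in> ?K" "v \<in> ?K"
  then obtain a b y z where "a \<ge> 0" "b \<ge> 0" "y \<in> K" "z \<in> K" "u = a *\<^sub>R x + y" "v = b *\<^sub>R x + z"
    by blast
  then show "u + v \<in> ?K"
    using assms by (intro CollectI exI[of _ "a + b"] exI[of _ "y + z"])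
      (simp add: algebra_simps convex_cone_add)
next
  fix u and c :: real assume "u \<in> ?K" "c \<ge> 0"
  then obtain a y where "a \<ge> 0" "y \<in> K" "u = a *\<^sub>R x + y"
    by blast
  then show "c *\<^sub>R u \<in> ?K"
    using assms \<open>c \<ge> 0\<close> by (intro CollectI exI[of _ "c * a"] exI[of _ "c *\<^sub>R y"])
      (simp add: algebra_simps convex_cone_scaleR)
qed

lemma convex_cone_hull_insert:
  "convex_cone hull (insert x S) = {a *\<^sub>R x + y | a y. a \<ge> 0 \<and> y \<in> convex_cone hull S}"
    (is "_ = ?K")
proof
  have "insert x S \<subseteq> ?K"
  proof
    fix v assume "v \<in> insert x S"
    then show "v \<in> ?K"
    proof
      assume "v = x"
      then show ?thesis
        by (intro CollectI exI[of _ 1] exI[of _ 0]) (simp add: convex_cone_hull_contains_0)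
    next
      assume "v \<in> S"
      then show ?thesis
        by (intro CollectI exI[of _ 0] exI[of _ v]) (simp add: hull_inc)
    qed
  qed
  then show "convex_cone hull (insert x S) \<subseteq> ?K"
    by (rule hull_minimal) (intro convex_cone_ray_sums convex_cone_convex_cone_hull)
  show "?K \<subseteq> convex_cone hull (insert x S)"
  proof clarify
    fix a :: real and y assume "a \<ge> 0" "y \<in> convex_cone hull S"
    have "a *\<^sub>R x \<in> convex_cone hull (insert x S)"
      using \<open>a \<ge> 0\<close> by (simp add: convex_cone_hull_mul hull_inc)
    moreover have "y \<in> convex_cone hull (insert x S)"
      using hull_mono[of S "insert x S"] \<open>y \<in> convex_cone hull S\<close> by blast
    ultimately show "a *\<^sub>R x + y \<in> convex_cone hull (insert x S)"
      by (rule convex_cone_hull_add)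
  qed
qed

lemma convex_cone_hull_two:
  "convex_cone hull {x, y} = {a *\<^sub>R x + b *\<^sub>R y | a b. a \<ge> 0 \<and> b \<ge> 0}"
  by (auto simp: convex_cone_hull_insert)

lemma mem_convex_cone_hull_two:
  "\<alpha> \<ge> 0 \<Longrightarrow> \<beta> \<ge> 0 \<Longrightarrow> \<alpha> *\<^sub>R x + \<beta> *\<^sub>R y \<in> convex_cone hull {x, y}"
  unfolding convex_cone_hull_two by blast

lemma convex_cone_hull_three:
  "convex_cone hull {x, y, z} = {a *\<^sub>R x + b *\<^sub>R y + c *\<^sub>R z | a b c. a \<ge> 0 \<and> b \<ge> 0 \<and> c \<ge> 0}"
  unfolding convex_cone_hull_insert[of x] convex_cone_hull_two by (auto simp: add.assoc)

lemma convex_cone_hull_insert_line: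
  "convex_cone hull (insert x (insert (- x) S)) = {a *\<^sub>R x + y | a y. y \<in> convex_cone hull S}"
proof (intro equalityI subsetI)
  fix z assume "z \<in> convex_cone hull (insert x (insert (- x) S))"
  then obtain \<alpha> \<beta> y where "z = \<alpha> *\<^sub>R x + (\<beta> *\<^sub>R (- x) + y)" "y \<in> convex_cone hull S"
    unfolding convex_cone_hull_insert by blast
  then have "z = (\<alpha> - \<beta>) *\<^sub>R x + y"
    by (simp add: algebra_simps)
  then show "z \<in> {a *\<^sub>R x + y | a y. y \<in> convex_cone hull S}"
    using \<open>y \<in> convex_cone hull S\<close> by blast
next
  fix z assume "z \<in> {a *\<^sub>R x + y | a y. y \<in> convex_cone hull S}"
  then obtain a y where z: "z = a *\<^sub>R x + y" "y \<in> convex_cone hull S"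
    by blast
  show "z \<in> convex_cone hull (insert x (insert (- x) S))"
  proof (cases "a \<ge> 0")
    case True
    then show ?thesis
      unfolding convex_cone_hull_insert
      by (intro CollectI exI[of _ a] exI[of _ y] conjI exI[of _ 0]) (simp_all add: z)
  next
    case False
    then show ?thesis
      unfolding convex_cone_hull_insert
      by (intro CollectI exI[of _ 0] exI[of _ "(- a) *\<^sub>R (- x) + y"] conjI exI[of _ "- a"] exI[of _ y])
         (simp_all add: z)
  qed
qed

lemma convex_cone_hull_line_ray:
  "convex_cone hull {x, - x, y} = {a *\<^sub>R x + b *\<^sub>R y | a b. b \<ge> 0}"
  unfolding convex_cone_hull_insert_line convex_cone_hull_insert[of y "{}"] by auto

lemma convex_cone_hull_insert_line_eq_Un:
  "convex_cone hull (insert x (insert (- x) S)) =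
     convex_cone hull (insert x S) \<union> convex_cone hull (insert (- x) S)"
proof (intro equalityI subsetI)
  fix z assume "z \<in> convex_cone hull (insert x (insert (- x) S))"
  then obtain a y where z: "z = a *\<^sub>R x + y" "y \<in> convex_cone hull S"
    unfolding convex_cone_hull_insert_line by blast
  show "z \<in> convex_cone hull (insert x S) \<union> convex_cone hull (insert (- x) S)"
  proof (cases "a \<ge> 0")
    case True
    then show ?thesis
      unfolding convex_cone_hull_insert using z by blast
  next
    case False
    then have "z = (- a) *\<^sub>R (- x) + y" "- a \<ge> 0"
      using z by simp_all
    then show ?thesis
      unfolding convex_cone_hull_insert using z(2) by blast
  qed
next
  fix z assume "z \<in> convex_cone hull (insert x S) \<union> convex_cone hull (insert (- x) S)"
  then show "z \<in> convex_cone hull (insert x (insert (- x) S))"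
    using hull_mono[of "insert x S" "insert x (insert (- x) S)" convex_cone]
      hull_mono[of "insert (- x) S" "insert x (insert (- x) S)" convex_cone]
    by blast
qed

lemma convex_cone_hull_eqI:
  assumes "T \<subseteq> convex_cone hull W" "W \<subseteq> convex_cone hull T"
  shows "convex_cone hull W = convex_cone hull T"
  using assms by (intro equalityI hull_minimal) (simp_all add: convex_cone_convex_cone_hull)

lemma direction_mem_convex_cone:
  assumes "convex_cone K" "e + b *\<^sub>R u \<in> K" "- e \<in> K" "b > 0"
  shows "u \<in> K"
proof -
  have "(e + b *\<^sub>R u) + - e \<in> K"
    by (rule convex_cone_add[OF assms(1-3)])
  then have "(1 / b) *\<^sub>R ((e + b *\<^sub>R u) + - e) \<in> K"
    using \<open>b > 0\<close> by (intro convex_cone_scaleR[OF assms(1)]) auto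
  moreover have "(1 / b) *\<^sub>R ((e + b *\<^sub>R u) + - e) = u"
    using \<open>b > 0\<close> by simp
  ultimately show ?thesis
    by simp
qed

lemma subspace_convex_cone_hull_if_negations:
  assumes "\<forall>w\<in>W. - w \<in> convex_cone hull W"
  shows "subspace (convex_cone hull W)"
proof -
  have "convex_cone {x. - x \<in> convex_cone hull W}"
  proof (rule convex_coneI)
    fix x y assume "x \<in> {x. - x \<in> convex_cone hull W}" "y \<in> {x. - x \<in> convex_cone hull W}"
    then show "x + y \<in> {x. - x \<in> convex_cone hull W}"
      using convex_cone_hull_add[of "- x" W "- y"] by simp
  next
    fix x and c :: real assume "x \<in> {x. - x \<in> convex_cone hull W}" "c \<ge> 0"
    then show "c *\<^sub>R x \<in> {x. - x \<in> convex_cone hull W}"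
      using convex_cone_hull_mul[of "- x" W c] by simp
  qed (simp add: convex_cone_hull_contains_0)
  then have "convex_cone hull W \<subseteq> {x. - x \<in> convex_cone hull W}"
    using assms by (intro hull_minimal) auto
  then show ?thesis
    by (auto simp: subspace_convex_cone_symmetric convex_cone_convex_cone_hull)
qed

lemma convex_cone_in_halfspace:
  fixes C :: "'a::euclidean_space set"
  assumes "closed C" "convex_cone C" "\<not> subspace C"
  obtains n where "norm n = 1" "\<forall>c\<in>C. n \<bullet> c \<ge> 0"
proof -
  obtain x where "x \<in> C" "- x \<notin> C"
    using assms(2,3) subspace_convex_cone_symmetric by blast
  then obtain a b where "a \<bullet> (- x) < b" and ab: "\<forall>y\<in>C. b < a \<bullet> y"
    using separating_hyperplane_closed_point[of C "- x"] assms(1,2) by (auto simp: convex_cone_def)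
  have "b < 0"
    using ab convex_cone_contains_0[OF assms(2)] by force
  have nonneg: "a \<bullet> c \<ge> 0" if "c \<in> C" for c
  proof (rule ccontr)
    assume "\<not> a \<bullet> c \<ge> 0"
    then have "(b / (a \<bullet> c)) *\<^sub>R c \<in> C"
      using \<open>b < 0\<close> that assms(2) by (intro convex_cone_scaleR) (auto simp: divide_nonpos_neg)
    then show False
      using ab \<open>\<not> a \<bullet> c \<ge> 0\<close> by fastforce
  qed
  have "a \<noteq> 0"
    using \<open>a \<bullet> (- x) < b\<close> \<open>b < 0\<close> by auto
  then show ?thesis
    using nonneg by (intro that[of "a /\<^sub>R norm a"]) auto
qed

lemma orthogonal_vector_off_span:
  fixes p :: "'a::euclidean_space"
  assumes "p \<notin> span S"
  obtains m where "\<forall>s\<in>S. m \<bullet> s = 0" "m \<bullet> p > 0"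
proof -
  obtain y m where "y \<in> span S" and m: "\<And>w. w \<in> span S \<Longrightarrow> orthogonal m w" and "p = y + m"
    using orthogonal_subspace_decomp_exists by blast
  then have "m \<noteq> 0"
    using assms by auto
  moreover have "m \<bullet> p = m \<bullet> m"
    using m[OF \<open>y \<in> span S\<close>] \<open>p = y + m\<close> by (simp add: orthogonal_def inner_add_right)
  ultimately show ?thesis
    using m span_base by (intro that[of m]) (auto simp: orthogonal_def)
qed

lemma orthonormal_expansion3:
  fixes p f n x :: "real^3"
  assumes "norm p = 1" "norm f = 1" "norm n = 1" "p \<bullet> f = 0" "p \<bullet> n = 0" "f \<bullet> n = 0"
  shows "x = (x \<bullet> p) *\<^sub>R p + (x \<bullet> f) *\<^sub>R f + (x \<bullet> n) *\<^sub>R n"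
proof -
  have distinct: "p \<noteq> f" "p \<noteq> n" "f \<noteq> n"
    using assms by (auto simp: norm_eq_1)
  have orth: "pairwise orthogonal {p, f, n}"
    using assms by (auto simp: pairwise_insert orthogonal_def inner_commute)
  then have "independent {p, f, n}"
    using assms by (intro pairwise_orthogonal_independent) auto
  moreover have "card {p, f, n} = 3"
    using distinct by simp
  ultimately have "x \<in> span {p, f, n}"
    using card_ge_dim_independent[of "{p, f, n}" UNIV] by auto
  then have "(\<Sum>i\<in>{p, f, n}. (x \<bullet> i) *\<^sub>R i) = x"
    using orth assms by (intro orthonormal_basis_expand) auto
  then show ?thesis
    using distinct by (simp add: add.assoc)
qed

lemma independent3I:
  fixes a b c :: "'a::real_vector"
  assumes "a \<noteq> b" "a \<noteq> c" "b \<noteq> c"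
    and "\<And>\<alpha> \<beta> \<gamma>. \<alpha> *\<^sub>R a + \<beta> *\<^sub>R b + \<gamma> *\<^sub>R c = 0 \<Longrightarrow> \<alpha> = 0 \<and> \<beta> = 0 \<and> \<gamma> = 0"
  shows "independent {a, b, c}"
  unfolding independent_explicit_finite_subsets
proof (intro allI impI ballI)
  fix T l v
  assume "T \<subseteq> {a, b, c}" "finite T" "(\<Sum>v\<in>T. l v *\<^sub>R v) = 0" "v \<in> T"
  define l' where "l' v = (if v \<in> T then l v else 0)" for v
  have "(\<Sum>v\<in>{a, b, c}. l' v *\<^sub>R v) = (\<Sum>v\<in>T. l v *\<^sub>R v)"
    using \<open>T \<subseteq> {a, b, c}\<close> by (intro sum.mono_neutral_cong_right) (auto simp: l'_def)
  then have "l' a *\<^sub>R a + l' b *\<^sub>R b + l' c *\<^sub>R c = 0"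
    using assms(1-3) \<open>(\<Sum>v\<in>T. l v *\<^sub>R v) = 0\<close> by (simp add: add.assoc)
  then have "l' a = 0" "l' b = 0" "l' c = 0"
    using assms(4) by blast+
  then show "l v = 0"
    using \<open>v \<in> T\<close> \<open>T \<subseteq> {a, b, c}\<close> by (auto simp: l'_def)
qed

lemma independent3_combination_eq_0:
  fixes a b c :: "'a::real_vector"
  assumes "independent {a, b, c}" "a \<noteq> b" "a \<noteq> c" "b \<noteq> c"
    and "\<alpha> *\<^sub>R a + \<beta> *\<^sub>R b + \<gamma> *\<^sub>R c = 0"
  shows "\<alpha> = 0 \<and> \<beta> = 0 \<and> \<gamma> = 0"
proof -
  define l where "l v = (if v = a then \<alpha> else if v = b then \<beta> else \<gamma>)" for v
  have "(\<Sum>v\<in>{a, b, c}. l v *\<^sub>R v) = 0"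
    using assms(2-5) by (simp add: l_def add.assoc)
  then have "\<forall>v\<in>{a, b, c}. l v = 0"
    using assms(1) unfolding independent_explicit_finite_subsets by blast
  then show ?thesis
    using assms(2-4) by (auto simp: l_def)
qed

lemma norm_orthonormal_combination:
  fixes p q :: "'a::real_inner"
  assumes "norm p = 1" "norm q = 1" "p \<bullet> q = 0"
  shows "norm (a *\<^sub>R p + b *\<^sub>R q) = sqrt (a\<^sup>2 + b\<^sup>2)"
proof -
  have "(a *\<^sub>R p + b *\<^sub>R q) \<bullet> (a *\<^sub>R p + b *\<^sub>R q) = a\<^sup>2 + b\<^sup>2"
    using assms by (simp add: inner_commute algebra_simps norm_eq_1 power2_eq_square)
  then show ?thesis
    by (simp add: norm_eq_sqrt_inner)
qed

lemma combination_nonzero_if_not_antipodal: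
  fixes x y :: "'a::real_normed_vector"
  assumes "norm x = 1" "norm y = 1" "x \<noteq> - y" "a \<ge> 0" "b \<ge> 0" "a + b > 0"
  shows "a *\<^sub>R x + b *\<^sub>R y \<noteq> 0"
proof
  assume "a *\<^sub>R x + b *\<^sub>R y = 0"
  then have "a *\<^sub>R x = - (b *\<^sub>R y)"
    by (simp add: eq_neg_iff_add_eq_0)
  then have "norm (a *\<^sub>R x) = norm (b *\<^sub>R y)"
    by simp
  then have "a = b"
    using assms by simp
  then have "a *\<^sub>R (x + y) = 0"
    using \<open>a *\<^sub>R x + b *\<^sub>R y = 0\<close> by (simp add: scaleR_add_right)
  then show False
    using \<open>a = b\<close> assms(3,6) by (simp add: eq_neg_iff_add_eq_0)
qed

lemma sine_rule_combination:
  fixes f n :: "'a::real_vector"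
  defines "d t \<equiv> cos t *\<^sub>R f + sin t *\<^sub>R n"
  shows "sin (\<beta> - \<alpha>) *\<^sub>R d \<gamma> = sin (\<beta> - \<gamma>) *\<^sub>R d \<alpha> + sin (\<gamma> - \<alpha>) *\<^sub>R d \<beta>"
proof -
  have "sin (\<beta> - \<alpha>) * cos \<gamma> = sin (\<beta> - \<gamma>) * cos \<alpha> + sin (\<gamma> - \<alpha>) * cos \<beta>"
    "sin (\<beta> - \<alpha>) * sin \<gamma> = sin (\<beta> - \<gamma>) * sin \<alpha> + sin (\<gamma> - \<alpha>) * sin \<beta>"
    by (simp_all add: sin_diff algebra_simps)
  then show ?thesis
    by (simp add: d_def scaleR_add_right scaleR_add_left flip: scaleR_scaleR)
      (simp add: algebra_simps flip: scaleR_add_left)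
qed

section \<open>Radial projections of cones\<close>

definition spherical_image :: "'a::real_normed_vector set \<Rightarrow> 'a set" where
  "spherical_image K = {inverse (norm v) *\<^sub>R v | v. v \<in> K \<and> v \<noteq> 0}"

definition cone_surface :: "'a::real_inner set \<Rightarrow> 'a set \<Rightarrow> bool" where
  "cone_surface C S \<longleftrightarrow>
    (if subspace C
     then \<exists>h. norm h = 1 \<and> (\<forall>c\<in>C. h \<bullet> c = 0) \<and>
            S = spherical_image {c + \<tau> *\<^sub>R h | c \<tau>. c \<in> C \<and> \<tau> \<ge> 0}
     else S = spherical_image C)"

definition interpolation_shape :: "(real^3) set \<Rightarrow> bool" where
  "interpolation_shape S \<longleftrightarrow> semi_great_circle S \<or> geodesic_arc S \<or> geodesic_triangle S \<or>
     two_adjacent_geodesic_triangles S \<or> hemisphere S"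

lemma sum_nonneg_pos_if_combination_nonzero:
  fixes W :: "'a::real_vector set"
  assumes "\<forall>w\<in>W. l w \<ge> 0" "(\<Sum>w\<in>W. l w *\<^sub>R w) \<noteq> 0"
  shows "(\<Sum>w\<in>W. l w) > 0"
proof -
  have "finite W"
    using assms(2) sum.infinite by blast
  moreover have "\<not> (\<forall>w\<in>W. l w = 0)"
  proof
    assume "\<forall>w\<in>W. l w = 0"
    then have "(\<Sum>w\<in>W. l w *\<^sub>R w) = 0"
      by simp
    with assms(2) show False ..
  qed
  ultimately have "(\<Sum>w\<in>W. l w) \<noteq> 0"
    using assms(1) sum_nonneg_eq_0_iff by blast
  then show ?thesis
    using assms(1) sum_nonneg[of W l] by fastforce
qed

lemma cone_surface_if_admissible_surface:
  assumes "admissible_surface \<epsilon> u R S"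
  shows "cone_surface (coneR \<epsilon> u R) S"
proof -
  define W where "W = u ` lattice_in \<epsilon> R"
  define C where "C = coneR \<epsilon> u R"
  have C: "C = {(\<Sum>w\<in>W. l w *\<^sub>R w) | l. \<forall>w\<in>W. l w \<ge> 0}"
    by (simp add: C_def coneR_def W_def)
  have surface_if_not_subspace: "{inverse (norm v) *\<^sub>R v | v. v \<noteq> 0 \<and> (\<exists>l. (\<forall>w\<in>W. l w \<ge> 0) \<and>
            (\<Sum>w\<in>W. l w) > 0 \<and> v = (\<Sum>w\<in>W. l w *\<^sub>R w))} = spherical_image C"
    unfolding spherical_image_def C using sum_nonneg_pos_if_combination_nonzero by blast
  have surface_if_subspace: "{inverse (norm v) *\<^sub>R v | v. v \<noteq> 0 \<and> (\<exists>l \<tau>. (\<forall>w\<in>W. l w \<ge> 0) \<and> \<tau> \<ge> 0 \<and>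
            (\<Sum>w\<in>W. l w) + \<tau> > 0 \<and> v = (\<Sum>w\<in>W. l w *\<^sub>R w) + \<tau> *\<^sub>R h)} =
         spherical_image {c + \<tau> *\<^sub>R h | c \<tau>. c \<in> C \<and> \<tau> \<ge> 0}" for h
  proof -
    have "(\<Sum>w\<in>W. l w) + \<tau> > 0"
      if "\<forall>w\<in>W. l w \<ge> 0" "\<tau> \<ge> 0" "(\<Sum>w\<in>W. l w *\<^sub>R w) + \<tau> *\<^sub>R h \<noteq> 0" for l \<tau>
    proof (cases "\<tau> = 0")
      case True
      then show ?thesis
        using that sum_nonneg_pos_if_combination_nonzero[of W l] by simp
    next
      case False
      then show ?thesis
        using that by (simp add: add_nonneg_pos sum_nonneg)
    qed
    then show ?thesis
      unfolding spherical_image_def C by blast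
  qed
  note adm = assms[unfolded admissible_surface_def Let_def, folded W_def C_def]
  show ?thesis
  proof (cases "subspace C")
    case True
    then show ?thesis
      using adm unfolding cone_surface_def surface_if_subspace C_def[symmetric] by simp
  next
    case False
    then show ?thesis
      using adm unfolding cone_surface_def surface_if_not_subspace C_def[symmetric] by simp
  qed
qed

lemma coneR_eq_convex_cone_hull:
  "finite (u ` lattice_in \<epsilon> R) \<Longrightarrow> coneR \<epsilon> u R = convex_cone hull (u ` lattice_in \<epsilon> R)"
  unfolding coneR_def Let_def by (rule nonneg_combinations_eq_convex_cone_hull)

text \<open>
  A sum over an infinite set is \<open>0\<close>, so \<^const>\<open>coneR\<close> degenerates when \<open>u\<close> takes
  infinitely many values on \<open>R\<close>.
\<close>

lemma coneR_infinite:
  assumes "infinite (u ` lattice_in \<epsilon> R)"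
  shows "coneR \<epsilon> u R = {0}"
proof -
  have "coneR \<epsilon> u R = {0 | l :: real^3 \<Rightarrow> real. \<forall>w\<in>u ` lattice_in \<epsilon> R. l w \<ge> 0}"
    using assms by (simp add: coneR_def)
  also have "\<dots> = {0}"
    by (auto intro: exI[of _ "\<lambda>_. 0"])
  finally show ?thesis .
qed

lemma mem_spherical_imageI:
  assumes "norm z = 1" "z \<in> K"
  shows "z \<in> spherical_image K"
  using assms unfolding spherical_image_def by (intro CollectI exI[of _ z]) auto

lemma spherical_image_Un: "spherical_image (A \<union> B) = spherical_image A \<union> spherical_image B"
  unfolding spherical_image_def by blast

lemma spherical_image_ray:
  assumes "norm h = 1"
  shows "spherical_image {a *\<^sub>R h | a. a \<ge> 0} = {h}"
proof
  show "spherical_image {a *\<^sub>R h | a. a \<ge> 0} \<subseteq> {h}"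
    using assms by (auto simp: spherical_image_def)
  have "h \<in> {a *\<^sub>R h | a. a \<ge> 0}"
    by (intro CollectI exI[of _ 1]) simp
  then show "{h} \<subseteq> spherical_image {a *\<^sub>R h | a. a \<ge> 0}"
    using mem_spherical_imageI[OF assms] by simp
qed

lemma semi_great_circle_spherical_image_halfplane:
  fixes p q :: "real^3"
  assumes "norm p = 1" "norm q = 1" "p \<bullet> q = 0"
  shows "semi_great_circle (spherical_image {a *\<^sub>R p + b *\<^sub>R q | a b. b \<ge> 0})"
  unfolding semi_great_circle_def
proof (intro exI conjI)
  let ?H = "{a *\<^sub>R p + b *\<^sub>R q | a b. b \<ge> 0}"
  show "spherical_image ?H = {cos t *\<^sub>R p + sin t *\<^sub>R q | t. 0 \<le> t \<and> t \<le> pi}"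
  proof (intro equalityI subsetI)
    fix z assume "z \<in> spherical_image ?H"
    then obtain a b where "b \<ge> 0" "a *\<^sub>R p + b *\<^sub>R q \<noteq> 0"
      and z: "z = inverse (norm (a *\<^sub>R p + b *\<^sub>R q)) *\<^sub>R (a *\<^sub>R p + b *\<^sub>R q)"
      unfolding spherical_image_def by blast
    define r where "r = sqrt (a\<^sup>2 + b\<^sup>2)"
    have "a \<noteq> 0 \<or> b \<noteq> 0"
      using \<open>a *\<^sub>R p + b *\<^sub>R q \<noteq> 0\<close> by auto
    then have "r > 0"
      by (simp add: r_def sum_power2_gt_zero_iff)
    have "r\<^sup>2 = a\<^sup>2 + b\<^sup>2"
      by (simp add: r_def)
    have "(a / r)\<^sup>2 + (b / r)\<^sup>2 = (a\<^sup>2 + b\<^sup>2) / r\<^sup>2"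
      by (simp add: power_divide add_divide_distrib)
    also have "\<dots> = 1"
      using \<open>r > 0\<close> by (simp flip: \<open>r\<^sup>2 = a\<^sup>2 + b\<^sup>2\<close>)
    finally obtain t where "0 \<le> t" "t \<le> pi" "a / r = cos t" "b / r = sin t"
      using sincos_total_pi[of "b / r" "a / r"] \<open>b \<ge> 0\<close> \<open>r > 0\<close> by auto
    moreover have "z = (a / r) *\<^sub>R p + (b / r) *\<^sub>R q"
      using z norm_orthonormal_combination[OF assms]
      by (simp add: r_def scaleR_add_right divide_inverse_commute)
    ultimately show "z \<in> {cos t *\<^sub>R p + sin t *\<^sub>R q | t. 0 \<le> t \<and> t \<le> pi}"
      by (intro CollectI exI[of _ t]) simp
  next
    fix z assume "z \<in> {cos t *\<^sub>R p + sin t *\<^sub>R q | t. 0 \<le> t \<and> t \<le> pi}"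
    then obtain t where "0 \<le> t" "t \<le> pi" and z: "z = cos t *\<^sub>R p + sin t *\<^sub>R q"
      by blast
    have "norm (cos t *\<^sub>R p + sin t *\<^sub>R q) = 1"
      using norm_orthonormal_combination[OF assms] by simp
    moreover have "cos t *\<^sub>R p + sin t *\<^sub>R q \<in> ?H"
      using sin_ge_zero[OF \<open>0 \<le> t\<close> \<open>t \<le> pi\<close>] by blast
    ultimately show "z \<in> spherical_image ?H"
      unfolding z by (rule mem_spherical_imageI)
  qed
qed (use assms in auto)

lemma geodesic_arc_spherical_image_cone:
  fixes x y :: "real^3"
  assumes "norm x = 1" "norm y = 1" "x \<noteq> - y"
  shows "geodesic_arc (spherical_image (convex_cone hull {x, y}))"
  unfolding geodesic_arc_def
proof (intro exI conjI)
  let ?arc = "{inverse (norm v) *\<^sub>R v | v. \<exists>t. 0 \<le> t \<and> t \<le> 1 \<and> v = (1 - t) *\<^sub>R x + t *\<^sub>R y}"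
  show "spherical_image (convex_cone hull {x, y}) = ?arc"
  proof
    show "spherical_image (convex_cone hull {x, y}) \<subseteq> ?arc"
    proof
      fix z assume "z \<in> spherical_image (convex_cone hull {x, y})"
      then obtain a b where ab: "a \<ge> 0" "b \<ge> 0" "a *\<^sub>R x + b *\<^sub>R y \<noteq> 0"
        and z: "z = inverse (norm (a *\<^sub>R x + b *\<^sub>R y)) *\<^sub>R (a *\<^sub>R x + b *\<^sub>R y)"
        unfolding spherical_image_def convex_cone_hull_two by blast
      have "a \<noteq> 0 \<or> b \<noteq> 0"
        using ab(3) by auto
      then have "a + b > 0"
        using ab(1,2) by linarith
      define t where "t = b / (a + b)"
      have "0 \<le> t" "t \<le> 1"
        using ab \<open>a + b > 0\<close> by (auto simp: t_def)
      have "(a + b) * (1 - t) = a" "(a + b) * t = b"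
        using \<open>a + b > 0\<close> by (simp_all add: t_def field_simps)
      then have "a *\<^sub>R x + b *\<^sub>R y = (a + b) *\<^sub>R ((1 - t) *\<^sub>R x + t *\<^sub>R y)"
        by (simp add: scaleR_add_right)
      then have "z = inverse (norm ((1 - t) *\<^sub>R x + t *\<^sub>R y)) *\<^sub>R ((1 - t) *\<^sub>R x + t *\<^sub>R y)"
        using \<open>a + b > 0\<close> by (simp add: z)
      then show "z \<in> ?arc"
        using \<open>0 \<le> t\<close> \<open>t \<le> 1\<close> by blast
    qed
    show "?arc \<subseteq> spherical_image (convex_cone hull {x, y})"
    proof clarify
      fix t :: real assume "0 \<le> t" "t \<le> 1"
      then have "(1 - t) *\<^sub>R x + t *\<^sub>R y \<noteq> 0"
        using combination_nonzero_if_not_antipodal[OF assms, of "1 - t" t] by simp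
      moreover have "(1 - t) *\<^sub>R x + t *\<^sub>R y \<in> convex_cone hull {x, y}"
        using \<open>t \<le> 1\<close> \<open>0 \<le> t\<close> unfolding convex_cone_hull_two by force
      ultimately show "inverse (norm ((1 - t) *\<^sub>R x + t *\<^sub>R y)) *\<^sub>R ((1 - t) *\<^sub>R x + t *\<^sub>R y)
          \<in> spherical_image (convex_cone hull {x, y})"
        unfolding spherical_image_def by blast
    qed
  qed
qed (use assms in auto)

lemma geodesic_arc_singleton:
  fixes h :: "real^3"
  assumes "norm h = 1"
  shows "geodesic_arc {h}"
proof -
  have "h \<noteq> - h"
    using assms by (auto simp: eq_neg_iff_add_eq_0 simp flip: scaleR_2)
  moreover have "convex_cone hull {h} = {a *\<^sub>R h | a. a \<ge> 0}"
    by (simp add: convex_cone_hull_insert[of h "{}"])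
  ultimately show ?thesis
    using geodesic_arc_spherical_image_cone[OF assms assms] spherical_image_ray[OF assms] by simp
qed

lemma spherical_image_cone_eq_geo_tri:
  assumes "sph_indep a b c"
  shows "spherical_image (convex_cone hull {a, b, c}) = geo_tri a b c"
proof -
  have "independent {a, b, c}" "a \<noteq> b" "a \<noteq> c" "b \<noteq> c"
    using assms by (auto simp: sph_indep_def)
  then have nonzero_iff:
    "\<alpha> *\<^sub>R a + \<beta> *\<^sub>R b + \<gamma> *\<^sub>R c \<noteq> 0 \<longleftrightarrow> \<alpha> + \<beta> + \<gamma> > 0"
    if "\<alpha> \<ge> 0" "\<beta> \<ge> 0" "\<gamma> \<ge> 0" for \<alpha> \<beta> \<gamma>
    using that independent3_combination_eq_0[of a b c \<alpha> \<beta> \<gamma>]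
    by (cases "\<alpha> = 0 \<and> \<beta> = 0 \<and> \<gamma> = 0") auto
  show ?thesis
  proof (intro equalityI subsetI)
    fix z assume "z \<in> spherical_image (convex_cone hull {a, b, c})"
    then obtain \<alpha> \<beta> \<gamma> where "\<alpha> \<ge> 0" "\<beta> \<ge> 0" "\<gamma> \<ge> 0"
      and "\<alpha> *\<^sub>R a + \<beta> *\<^sub>R b + \<gamma> *\<^sub>R c \<noteq> 0"
      and "z = inverse (norm (\<alpha> *\<^sub>R a + \<beta> *\<^sub>R b + \<gamma> *\<^sub>R c)) *\<^sub>R
        (\<alpha> *\<^sub>R a + \<beta> *\<^sub>R b + \<gamma> *\<^sub>R c)"
      unfolding spherical_image_def convex_cone_hull_three by auto
    then show "z \<in> geo_tri a b c"
      unfolding geo_tri_def using nonzero_iff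
      by (intro CollectI exI[of _ "\<alpha> *\<^sub>R a + \<beta> *\<^sub>R b + \<gamma> *\<^sub>R c"] conjI
          exI[of _ \<alpha>] exI[of _ \<beta>] exI[of _ \<gamma>]) auto
  next
    fix z assume "z \<in> geo_tri a b c"
    then obtain \<alpha> \<beta> \<gamma> where "\<alpha> \<ge> 0" "\<beta> \<ge> 0" "\<gamma> \<ge> 0" "\<alpha> + \<beta> + \<gamma> > 0"
      and "z = inverse (norm (\<alpha> *\<^sub>R a + \<beta> *\<^sub>R b + \<gamma> *\<^sub>R c)) *\<^sub>R
        (\<alpha> *\<^sub>R a + \<beta> *\<^sub>R b + \<gamma> *\<^sub>R c)"
      unfolding geo_tri_def by auto
    then show "z \<in> spherical_image (convex_cone hull {a, b, c})"
      unfolding spherical_image_def convex_cone_hull_three using nonzero_iff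
      by (intro CollectI exI[of _ "\<alpha> *\<^sub>R a + \<beta> *\<^sub>R b + \<gamma> *\<^sub>R c"] conjI
          exI[of _ \<alpha>] exI[of _ \<beta>] exI[of _ \<gamma>]) auto
  qed
qed

lemma hemisphere_spherical_image_halfspace:
  fixes h :: "real^3"
  assumes "norm h = 1"
  shows "hemisphere (spherical_image {x. h \<bullet> x \<ge> 0})"
  unfolding hemisphere_def
proof (intro exI conjI disjI2)
  show "spherical_image {x. h \<bullet> x \<ge> 0} = {q \<in> sphere 0 1. q \<bullet> h \<ge> 0}"
  proof
    show "spherical_image {x. h \<bullet> x \<ge> 0} \<subseteq> {q \<in> sphere 0 1. q \<bullet> h \<ge> 0}"
      by (auto simp: spherical_image_def inner_commute)
    show "{q \<in> sphere 0 1. q \<bullet> h \<ge> 0} \<subseteq> spherical_image {x. h \<bullet> x \<ge> 0}"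
      by (auto simp: inner_commute intro: mem_spherical_imageI)
  qed
qed (fact assms)

lemma subspace_dim_one_eq_line:
  fixes C :: "'a::euclidean_space set"
  assumes "subspace C" "dim C = 1"
  obtains p where "norm p = 1" "C = range (\<lambda>a. a *\<^sub>R p)"
proof -
  obtain B where "B \<subseteq> C" "independent B" "C \<subseteq> span B" "card B = 1"
    using basis_exists[of C] assms(2) by metis
  then obtain b where "B = {b}"
    by (meson card_1_singletonE)
  then have "b \<noteq> 0"
    using \<open>independent B\<close> by auto
  have "span {b} = C"
  proof
    show "span {b} \<subseteq> C"
      using \<open>B \<subseteq> C\<close> \<open>B = {b}\<close> by (simp add: span_minimal assms(1))
    show "C \<subseteq> span {b}"
      using \<open>C \<subseteq> span B\<close> \<open>B = {b}\<close> by simp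
  qed
  define p where "p = b /\<^sub>R norm b"
  have "C = range (\<lambda>a. a *\<^sub>R p)"
  proof (intro equalityI subsetI)
    fix c assume "c \<in> C"
    then obtain k where "c = k *\<^sub>R b"
      using \<open>span {b} = C\<close> by (auto simp: span_singleton)
    then have "c = (k * norm b) *\<^sub>R p"
      using \<open>b \<noteq> 0\<close> by (simp add: p_def)
    then show "c \<in> range (\<lambda>a. a *\<^sub>R p)"
      by (rule image_eqI) simp
  next
    fix c assume "c \<in> range (\<lambda>a. a *\<^sub>R p)"
    then show "c \<in> C"
      using \<open>span {b} = C\<close> by (auto simp: p_def span_singleton)
  qed
  moreover have "norm p = 1"
    using \<open>b \<noteq> 0\<close> by (simp add: p_def)
  ultimately show ?thesis
    using that by blast
qed

lemma hyperplane_plus_ray_eq_halfspace: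
  fixes h :: "'a::real_inner"
  assumes "norm h = 1"
  shows "{c + \<tau> *\<^sub>R h | c \<tau>. h \<bullet> c = 0 \<and> \<tau> \<ge> 0} = {x. h \<bullet> x \<ge> 0}"
proof (intro equalityI subsetI)
  fix x assume "x \<in> {c + \<tau> *\<^sub>R h | c \<tau>. h \<bullet> c = 0 \<and> \<tau> \<ge> 0}"
  then obtain c \<tau> where "x = c + \<tau> *\<^sub>R h" "h \<bullet> c = 0" "\<tau> \<ge> 0"
    by blast
  then have "h \<bullet> x = \<tau>"
    using assms by (simp add: inner_add_right norm_eq_1)
  then show "x \<in> {x. h \<bullet> x \<ge> 0}"
    using \<open>\<tau> \<ge> 0\<close> by simp
next
  fix x assume "x \<in> {x. h \<bullet> x \<ge> 0}"
  moreover have "h \<bullet> (x - (h \<bullet> x) *\<^sub>R h) = 0"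
    using assms by (simp add: inner_diff_right norm_eq_1)
  ultimately show "x \<in> {c + \<tau> *\<^sub>R h | c \<tau>. h \<bullet> c = 0 \<and> \<tau> \<ge> 0}"
    by (intro CollectI exI[of _ "x - (h \<bullet> x) *\<^sub>R h"] exI[of _ "h \<bullet> x"]) simp
qed

lemma subspace_orthogonal_to_unit_cases:
  fixes C :: "(real^3) set"
  assumes "subspace C" "norm h = 1" "\<forall>c\<in>C. h \<bullet> c = 0"
  obtains "C = {0}"
    | p where "norm p = 1" "C = range (\<lambda>a. a *\<^sub>R p)"
    | "C = {x. h \<bullet> x = 0}"
proof -
  have "C \<subseteq> {x. h \<bullet> x = 0}"
    using assms(3) by blast
  moreover have "h \<noteq> 0"
    using assms(2) by auto
  then have "dim {x. h \<bullet> x = 0} = 2"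
    using dim_hyperplane[of h] by simp
  ultimately have "dim C \<le> 2"
    by (metis dim_subset)
  then consider "dim C = 0" | "dim C = 1" | "dim C = 2"
    by linarith
  then show ?thesis
  proof cases
    case 1
    then show ?thesis
      using subspace_0[OF assms(1)] that(1) by auto
  next
    case 2
    then show ?thesis
      using subspace_dim_one_eq_line[OF assms(1)] that(2) by blast
  next
    case 3
    then show ?thesis
      using subspace_dim_equal[OF assms(1) subspace_hyperplane \<open>C \<subseteq> {x. h \<bullet> x = 0}\<close>]
        \<open>dim {x. h \<bullet> x = 0} = 2\<close> that(3) by simp
  qed
qed

lemma interpolation_shape_if_subspace:
  fixes C :: "(real^3) set"
  assumes "subspace C" "cone_surface C S"
  shows "interpolation_shape S"
proof -
  obtain h where h: "norm h = 1" "\<forall>c\<in>C. h \<bullet> c = 0"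
    and S: "S = spherical_image {c + \<tau> *\<^sub>R h | c \<tau>. c \<in> C \<and> \<tau> \<ge> 0}"
    using assms unfolding cone_surface_def by auto
  show ?thesis
  proof (cases rule: subspace_orthogonal_to_unit_cases[OF assms(1) h])
    case 1
    then have "S = {h}"
      using spherical_image_ray[OF h(1)] by (simp add: S)
    then show ?thesis
      using geodesic_arc_singleton[OF h(1)] by (simp add: interpolation_shape_def)
  next
    case (2 p)
    then have "{c + \<tau> *\<^sub>R h | c \<tau>. c \<in> C \<and> \<tau> \<ge> 0} = {a *\<^sub>R p + \<tau> *\<^sub>R h | a \<tau>. \<tau> \<ge> 0}"
      by auto
    moreover have "p \<bullet> h = 0"
      using h(2) 2 by (auto simp: inner_commute)
    ultimately show ?thesis
      using semi_great_circle_spherical_image_halfplane[OF \<open>norm p = 1\<close> h(1)]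
      by (simp add: S interpolation_shape_def)
  next
    case 3
    then have "S = spherical_image {x. h \<bullet> x \<ge> 0}"
      using hyperplane_plus_ray_eq_halfspace[OF h(1)] by (simp add: S)
    then show ?thesis
      using hemisphere_spherical_image_halfspace[OF h(1)] by (simp add: interpolation_shape_def)
  qed
qed

section \<open>Cones generated by three vectors\<close>

lemma unit_negative_multiple_eq_neg:
  fixes a b :: "'a::real_normed_vector"
  assumes "norm a = 1" "norm b = 1" "s < 0" "a = s *\<^sub>R b"
  shows "a = - b"
proof -
  have "\<bar>s\<bar> = 1"
    using assms(1,2,4) by simp
  then show ?thesis
    using assms(3,4) by simp
qed

lemma mem_convex_cone_hull_if_mixed_signs:
  fixes a b c :: "'a::real_vector"
  assumes "a = s *\<^sub>R b + t *\<^sub>R c" "s > 0" "t < 0"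
  shows "b \<in> convex_cone hull {a, c}"
proof -
  have "b = (1 / s) *\<^sub>R a + (- t / s) *\<^sub>R c"
    using assms by (simp add: algebra_simps)
  moreover have "(1 / s) *\<^sub>R a + (- t / s) *\<^sub>R c \<in> convex_cone hull {a, c}"
    using assms(2,3) by (intro mem_convex_cone_hull_two) (simp_all add: divide_nonpos_pos)
  ultimately show ?thesis
    by simp
qed

lemma subspace_convex_cone_hull_if_negative_signs:
  fixes a b c :: "'a::real_vector"
  assumes a: "a = s *\<^sub>R b + t *\<^sub>R c" and "s < 0" "t < 0"
  shows "subspace (convex_cone hull {a, b, c})"
proof (rule subspace_convex_cone_hull_if_negations)
  let ?C = "convex_cone hull {a, b, c}"
  have eqs: "- a = (- s) *\<^sub>R b + (- t) *\<^sub>R c"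
    "- b = (- 1 / s) *\<^sub>R a + (t / s) *\<^sub>R c"
    "- c = (- 1 / t) *\<^sub>R a + (s / t) *\<^sub>R b"
    using assms by (simp_all add: algebra_simps)
  have "- a \<in> convex_cone hull {b, c}"
    unfolding eqs using assms(2,3) by (intro mem_convex_cone_hull_two) simp_all
  then have "- a \<in> ?C"
    by (rule subsetD[OF hull_mono, rotated]) auto
  have "- b \<in> convex_cone hull {a, c}"
    unfolding eqs using assms(2,3) by (intro mem_convex_cone_hull_two) (simp_all add: divide_nonpos_neg)
  then have "- b \<in> ?C"
    by (rule subsetD[OF hull_mono, rotated]) auto
  have "- c \<in> convex_cone hull {a, b}"
    unfolding eqs using assms(2,3) by (intro mem_convex_cone_hull_two) (simp_all add: divide_nonpos_neg)
  then have "- c \<in> ?C"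
    by (rule subsetD[OF hull_mono, rotated]) auto
  show "\<forall>w\<in>{a, b, c}. - w \<in> ?C"
    using \<open>- a \<in> ?C\<close> \<open>- b \<in> ?C\<close> \<open>- c \<in> ?C\<close> by simp
qed

lemma convex_cone_hull_coplanar_three:
  fixes a b c :: "real^3"
  assumes unit: "{a, b, c} \<subseteq> sphere 0 1"
    and not_antipodal: "\<forall>x\<in>{a, b, c}. \<forall>y\<in>{a, b, c}. x \<noteq> - y"
    and "a \<in> span {b, c}"
    and not_subspace: "\<not> subspace (convex_cone hull {a, b, c})"
  obtains x y where "x \<in> {a, b, c}" "y \<in> {a, b, c}"
    "convex_cone hull {a, b, c} = convex_cone hull {x, y}"
proof -
  have norms: "norm a = 1" "norm b = 1" "norm c = 1"
    using unit by auto
  obtain s t where a: "a = s *\<^sub>R b + t *\<^sub>R c"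
    using \<open>a \<in> span {b, c}\<close> by (auto simp: span_breakdown_eq span_singleton algebra_simps)
  let ?C = "convex_cone hull {a, b, c}"
  have "\<not> (s < 0 \<and> t = 0)"
    using a norms(1,2) unit_negative_multiple_eq_neg[of a b s] not_antipodal by auto
  moreover have "\<not> (s = 0 \<and> t < 0)"
    using a norms(1,3) unit_negative_multiple_eq_neg[of a c t] not_antipodal by auto
  ultimately consider "s \<ge> 0" "t \<ge> 0" | "s > 0" "t < 0" | "s < 0" "t > 0" | "s < 0" "t < 0"
    by linarith
  then show ?thesis
  proof cases
    case 1
    then have "a \<in> convex_cone hull {b, c}"
      using a by (simp add: mem_convex_cone_hull_two)
    then show ?thesis
      using that[of b c] by (simp add: hull_redundant)
  next
    case 2
    then have "b \<in> convex_cone hull {a, c}"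
      using a by (intro mem_convex_cone_hull_if_mixed_signs)
    then have "?C = convex_cone hull {a, c}"
      using hull_redundant[of b convex_cone "{a, c}"] by (simp add: insert_commute)
    then show ?thesis
      using that[of a c] by simp
  next
    case 3
    then have "c \<in> convex_cone hull {a, b}"
      using a by (intro mem_convex_cone_hull_if_mixed_signs[of a t c s b]) (simp_all add: add.commute)
    then have "?C = convex_cone hull {a, b}"
      using hull_redundant[of c convex_cone "{a, b}"] by (simp add: insert_commute)
    then show ?thesis
      using that[of a b] by simp
  next
    case 4
    then show ?thesis
      using subspace_convex_cone_hull_if_negative_signs[OF a] not_subspace by simp
  qed
qed

lemma convex_cone_hull_three_eq_two:
  fixes a b c :: "real^3"
  assumes unit: "{a, b, c} \<subseteq> sphere 0 1"
    and not_antipodal: "\<forall>x\<in>{a, b, c}. \<forall>y\<in>{a, b, c}. x \<noteq> - y"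
    and "\<not> sph_indep a b c"
    and not_subspace: "\<not> subspace (convex_cone hull {a, b, c})"
  obtains x y where "x \<in> {a, b, c}" "y \<in> {a, b, c}"
    "convex_cone hull {a, b, c} = convex_cone hull {x, y}"
proof (cases "a = b \<or> a = c \<or> b = c")
  case True
  then consider "{a, b, c} = {b, c}" | "{a, b, c} = {a, b}"
    by auto
  then show ?thesis
  proof cases
    case 1
    show ?thesis
      by (rule that[of b c]) (simp_all add: 1)
  next
    case 2
    show ?thesis
      by (rule that[of a b]) (simp_all add: 2)
  qed
next
  case False
  then have "dependent {a, b, c}"
    using \<open>\<not> sph_indep a b c\<close> unit by (auto simp: sph_indep_def)
  then obtain v where v: "v \<in> {a, b, c}" "v \<in> span ({a, b, c} - {v})"
    unfolding dependent_def by blast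
  have "card ({a, b, c} - {v}) = 2"
    using False v(1) by (auto simp: card_Diff_singleton)
  then obtain y z where yz: "{a, b, c} - {v} = {y, z}"
    by (auto simp: card_2_iff)
  then have perm: "{v, y, z} = {a, b, c}"
    using v(1) by auto
  show ?thesis
    by (rule convex_cone_hull_coplanar_three[of v y z, unfolded perm,
          OF unit not_antipodal v(2)[unfolded yz] not_subspace])
      (fact that)
qed

lemma interpolation_shape_three_points:
  fixes a b c :: "real^3"
  assumes unit: "{a, b, c} \<subseteq> sphere 0 1"
    and not_antipodal: "\<forall>x\<in>{a, b, c}. \<forall>y\<in>{a, b, c}. x \<noteq> - y"
    and not_subspace: "\<not> subspace (convex_cone hull {a, b, c})"
  shows "interpolation_shape (spherical_image (convex_cone hull {a, b, c}))"
proof (cases "sph_indep a b c")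
  case True
  then show ?thesis
    using spherical_image_cone_eq_geo_tri[OF True]
    by (auto simp: interpolation_shape_def geodesic_triangle_def)
next
  case False
  obtain x y where "x \<in> {a, b, c}" "y \<in> {a, b, c}"
    and eq: "convex_cone hull {a, b, c} = convex_cone hull {x, y}"
    using convex_cone_hull_three_eq_two[OF unit not_antipodal False not_subspace] by blast
  then have "norm x = 1" "norm y = 1" "x \<noteq> - y"
    using unit not_antipodal by (auto simp: subset_iff)
  then show ?thesis
    unfolding eq interpolation_shape_def by (simp add: geodesic_arc_spherical_image_cone)
qed

section \<open>Cones containing a line\<close>

text \<open>
  Coordinates for a cone containing the line \<open>\<real>p\<close> and lying in the half-space \<open>n \<bullet> x \<ge> 0\<close>:
  a generator is described by its \<open>p\<close>-component and the polar coordinates of its projection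
  to the \<open>(f, n)\<close>-plane, whose polar angle lies in \<open>[0, \<pi>]\<close>.
\<close>

locale antipodal_cone =
  fixes W :: "(real^3) set" and p f n :: "real^3"
  assumes finite_W: "finite W" and W_unit: "W \<subseteq> sphere 0 1"
    and p_mem: "p \<in> W" and neg_p_mem: "- p \<in> W"
    and norm_p: "norm p = 1" and norm_f: "norm f = 1" and norm_n: "norm n = 1"
    and p_f: "p \<bullet> f = 0" and p_n: "p \<bullet> n = 0" and f_n: "f \<bullet> n = 0"
    and halfspace: "\<forall>c\<in>convex_cone hull W. n \<bullet> c \<ge> 0"
    and not_subspace: "\<not> subspace (convex_cone hull W)"
begin

definition plane_dir :: "real \<Rightarrow> real^3" where
  "plane_dir t = cos t *\<^sub>R f + sin t *\<^sub>R n"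

definition polar_radius :: "real^3 \<Rightarrow> real" where
  "polar_radius w = sqrt ((w \<bullet> f)\<^sup>2 + (w \<bullet> n)\<^sup>2)"

definition polar_angle :: "real^3 \<Rightarrow> real" where
  "polar_angle w = arccos ((w \<bullet> f) / polar_radius w)"

lemma orthonormal_expansion: "x = (x \<bullet> p) *\<^sub>R p + (x \<bullet> f) *\<^sub>R f + (x \<bullet> n) *\<^sub>R n"
  using norm_p norm_f norm_n p_f p_n f_n by (rule orthonormal_expansion3)

lemma inner_self_basis: "p \<bullet> p = 1" "f \<bullet> f = 1" "n \<bullet> n = 1"
  using norm_p norm_f norm_n by (simp_all add: norm_eq_1)

lemma inner_plane_dir:
  "p \<bullet> plane_dir t = 0" "plane_dir t \<bullet> f = cos t" "plane_dir t \<bullet> n = sin t"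
  using p_f p_n f_n inner_self_basis
  by (simp_all add: plane_dir_def inner_add_left inner_add_right inner_commute)

lemma norm_plane_dir: "norm (plane_dir t) = 1"
proof -
  have "plane_dir t \<bullet> plane_dir t = (cos t)\<^sup>2 + (sin t)\<^sup>2"
    using inner_plane_dir by (simp add: plane_dir_def inner_add_right power2_eq_square)
  then show ?thesis
    by (simp add: norm_eq_1)
qed

lemma plane_dir_sine_rule:
  "sin (\<beta> - \<alpha>) *\<^sub>R plane_dir \<gamma> = sin (\<beta> - \<gamma>) *\<^sub>R plane_dir \<alpha> + sin (\<gamma> - \<alpha>) *\<^sub>R plane_dir \<beta>"
  unfolding plane_dir_def by (rule sine_rule_combination)

lemma polar_radius_nonneg: "polar_radius w \<ge> 0"
  by (simp add: polar_radius_def)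

lemma polar_cos_bounds: "- 1 \<le> (w \<bullet> f) / polar_radius w" "(w \<bullet> f) / polar_radius w \<le> 1"
proof -
  have "w \<bullet> f \<le> polar_radius w" "- (w \<bullet> f) \<le> polar_radius w"
    using real_sqrt_sum_squares_ge1[of "- (w \<bullet> f)" "w \<bullet> n"] by (simp_all add: polar_radius_def)
  moreover note polar_radius_nonneg[of w]
  ultimately show "- 1 \<le> (w \<bullet> f) / polar_radius w" "(w \<bullet> f) / polar_radius w \<le> 1"
    by (cases "polar_radius w = 0"; simp add: divide_le_eq le_divide_eq)+
qed

lemma polar_angle_bounds: "0 \<le> polar_angle w" "polar_angle w \<le> pi"
  using polar_cos_bounds by (simp_all add: polar_angle_def arccos_lbound arccos_ubound)

lemma polar_coordinates:
  assumes "n \<bullet> w \<ge> 0" "polar_radius w > 0"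
  shows "w \<bullet> f = polar_radius w * cos (polar_angle w)" "w \<bullet> n = polar_radius w * sin (polar_angle w)"
proof -
  define \<rho> where "\<rho> = polar_radius w"
  have "\<rho>\<^sup>2 = (w \<bullet> f)\<^sup>2 + (w \<bullet> n)\<^sup>2"
    by (simp add: \<rho>_def polar_radius_def)
  have "cos (polar_angle w) = (w \<bullet> f) / \<rho>"
    using polar_cos_bounds by (simp add: polar_angle_def \<rho>_def)
  moreover have "sin (polar_angle w) = (w \<bullet> n) / \<rho>"
  proof -
    have "((w \<bullet> f) / \<rho>)\<^sup>2 + ((w \<bullet> n) / \<rho>)\<^sup>2 = ((w \<bullet> f)\<^sup>2 + (w \<bullet> n)\<^sup>2) / \<rho>\<^sup>2"
      by (simp add: power_divide add_divide_distrib)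
    also have "\<dots> = 1"
      using assms(2) by (simp add: \<rho>_def flip: \<open>\<rho>\<^sup>2 = _\<close>)
    finally have "1 - ((w \<bullet> f) / \<rho>)\<^sup>2 = ((w \<bullet> n) / \<rho>)\<^sup>2"
      by simp
    moreover have "(w \<bullet> n) / \<rho> \<ge> 0"
      using assms by (simp add: \<rho>_def inner_commute)
    moreover have "sin (polar_angle w) = sqrt (1 - ((w \<bullet> f) / \<rho>)\<^sup>2)"
      using polar_cos_bounds by (simp add: polar_angle_def \<rho>_def sin_arccos)
    ultimately show ?thesis
      by (simp only: real_sqrt_abs abs_of_nonneg)
  qed
  ultimately show "w \<bullet> f = polar_radius w * cos (polar_angle w)"
    "w \<bullet> n = polar_radius w * sin (polar_angle w)"
    using assms(2) by (simp_all add: \<rho>_def)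
qed

lemma polar_decomposition:
  assumes "n \<bullet> w \<ge> 0"
  shows "w = (w \<bullet> p) *\<^sub>R p + polar_radius w *\<^sub>R plane_dir (polar_angle w)"
proof (cases "polar_radius w > 0")
  case True
  then have "polar_radius w *\<^sub>R plane_dir (polar_angle w) = (w \<bullet> f) *\<^sub>R f + (w \<bullet> n) *\<^sub>R n"
    using polar_coordinates[OF assms] by (simp add: plane_dir_def scaleR_add_right)
  then show ?thesis
    using orthonormal_expansion[of w] by (simp add: add.assoc)
next
  case False
  then have "polar_radius w = 0"
    using polar_radius_nonneg[of w] by linarith
  then have "w \<bullet> f = 0" "w \<bullet> n = 0"
    by (simp_all add: polar_radius_def)
  then show ?thesis
    using orthonormal_expansion[of w] \<open>polar_radius w = 0\<close> by simp
qed

lemma normal_inner_nonneg: "w \<in> W \<Longrightarrow> n \<bullet> w \<ge> 0"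
  by (rule bspec[OF halfspace hull_inc])

lemma line_mem_cone: "a *\<^sub>R p \<in> convex_cone hull W"
proof (cases "a \<ge> 0")
  case True
  then show ?thesis
    using p_mem by (simp add: convex_cone_hull_mul hull_inc)
next
  case False
  then have "(- a) *\<^sub>R (- p) \<in> convex_cone hull W"
    using neg_p_mem by (intro convex_cone_hull_mul hull_inc) auto
  then show ?thesis
    by simp
qed

lemma plane_dir_mem:
  assumes "convex_cone K" "\<And>a. a *\<^sub>R p \<in> K" "w \<in> K" "polar_radius w > 0" "n \<bullet> w \<ge> 0"
  shows "plane_dir (polar_angle w) \<in> K"
proof (rule direction_mem_convex_cone[OF assms(1)])
  show "(w \<bullet> p) *\<^sub>R p + polar_radius w *\<^sub>R plane_dir (polar_angle w) \<in> K"
    using assms(3) polar_decomposition[OF assms(5)] by simp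
  show "- ((w \<bullet> p) *\<^sub>R p) \<in> K"
    using assms(2)[of "- (w \<bullet> p)"] by simp
qed (fact assms(4))

lemma exists_off_axis_generator: "\<exists>w\<in>W. polar_radius w > 0"
proof (rule ccontr)
  assume "\<not> (\<exists>w\<in>W. polar_radius w > 0)"
  have "W \<subseteq> span {p}"
  proof
    fix w assume "w \<in> W"
    then have "polar_radius w = 0"
      using \<open>\<not> (\<exists>w\<in>W. polar_radius w > 0)\<close> polar_radius_nonneg[of w] by force
    then have "w = (w \<bullet> p) *\<^sub>R p"
      using polar_decomposition[OF normal_inner_nonneg[OF \<open>w \<in> W\<close>]] by simp
    moreover have "(w \<bullet> p) *\<^sub>R p \<in> span {p}"
      by (intro span_scale span_base) simp
    ultimately show "w \<in> span {p}"
      by (rule ssubst)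
  qed
  then have "convex_cone hull W \<subseteq> span {p}"
    by (intro hull_minimal) (simp_all add: convex_cone_span)
  moreover have "span {p} \<subseteq> convex_cone hull W"
    using line_mem_cone by (auto simp: span_singleton)
  ultimately have "convex_cone hull W = span {p}"
    by (rule antisym)
  then show False
    using not_subspace by simp
qed

lemma interpolation_shape_if_single_direction:
  assumes q: "q \<in> W" "polar_radius q > 0"
    and same: "\<forall>w\<in>W. polar_radius w > 0 \<longrightarrow> polar_angle w = t"
  shows "interpolation_shape (spherical_image (convex_cone hull W))"
proof -
  let ?d = "plane_dir t"
  have "?d \<in> convex_cone hull W"
    using plane_dir_mem[OF convex_cone_convex_cone_hull line_mem_cone hull_inc[OF q(1)] q(2) normal_inner_nonneg[OF q(1)]] same q by simp
  then have "{p, - p, ?d} \<subseteq> convex_cone hull W"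
    using p_mem neg_p_mem by (simp add: hull_inc)
  moreover have "W \<subseteq> convex_cone hull {p, - p, ?d}"
  proof
    fix w assume "w \<in> W"
    have "polar_radius w *\<^sub>R plane_dir (polar_angle w) = polar_radius w *\<^sub>R ?d"
      using same \<open>w \<in> W\<close> polar_radius_nonneg[of w] by (cases "polar_radius w > 0") auto
    have "w = (w \<bullet> p) *\<^sub>R p + polar_radius w *\<^sub>R plane_dir (polar_angle w)"
      by (rule polar_decomposition[OF normal_inner_nonneg[OF \<open>w \<in> W\<close>]])
    also have "\<dots> = (w \<bullet> p) *\<^sub>R p + polar_radius w *\<^sub>R ?d"
      using \<open>polar_radius w *\<^sub>R plane_dir (polar_angle w) = _\<close> by simp
    finally have "w = (w \<bullet> p) *\<^sub>R p + polar_radius w *\<^sub>R ?d" .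
    then show "w \<in> convex_cone hull {p, - p, ?d}"
      unfolding convex_cone_hull_line_ray using polar_radius_nonneg[of w] by blast
  qed
  ultimately have "convex_cone hull W = {a *\<^sub>R p + b *\<^sub>R ?d | a b. b \<ge> 0}"
    unfolding convex_cone_hull_line_ray[symmetric] by (rule convex_cone_hull_eqI)
  then show ?thesis
    using semi_great_circle_spherical_image_halfplane[OF norm_p norm_plane_dir inner_plane_dir(1)]
    by (simp add: interpolation_shape_def)
qed

lemma sph_indep_if_det_nonzero:
  assumes "q \<in> W" "r \<in> W" "norm z = 1" "z \<bullet> f = 0" "z \<bullet> n = 0"
    and det: "(q \<bullet> f) * (r \<bullet> n) - (q \<bullet> n) * (r \<bullet> f) \<noteq> 0"
  shows "sph_indep q r z"
proof -
  have "q \<noteq> r" "q \<noteq> z" "r \<noteq> z"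
    using assms(4-6) by auto
  moreover have "independent {q, r, z}"
  proof (rule independent3I[OF \<open>q \<noteq> r\<close> \<open>q \<noteq> z\<close> \<open>r \<noteq> z\<close>])
    fix \<alpha> \<beta> \<gamma> assume comb: "\<alpha> *\<^sub>R q + \<beta> *\<^sub>R r + \<gamma> *\<^sub>R z = 0"
    have "(\<alpha> *\<^sub>R q + \<beta> *\<^sub>R r + \<gamma> *\<^sub>R z) \<bullet> f = \<alpha> * (q \<bullet> f) + \<beta> * (r \<bullet> f)"
      "(\<alpha> *\<^sub>R q + \<beta> *\<^sub>R r + \<gamma> *\<^sub>R z) \<bullet> n = \<alpha> * (q \<bullet> n) + \<beta> * (r \<bullet> n)"
      using assms(4,5) by (simp_all add: inner_add_left)
    then have eqs: "\<alpha> * (q \<bullet> f) + \<beta> * (r \<bullet> f) = 0" "\<alpha> * (q \<bullet> n) + \<beta> * (r \<bullet> n) = 0"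
      using comb by simp_all
    have "\<alpha> * ((q \<bullet> f) * (r \<bullet> n) - (q \<bullet> n) * (r \<bullet> f)) =
        (r \<bullet> n) * (\<alpha> * (q \<bullet> f) + \<beta> * (r \<bullet> f)) - (r \<bullet> f) * (\<alpha> * (q \<bullet> n) + \<beta> * (r \<bullet> n))"
      by (simp add: algebra_simps)
    then have "\<alpha> = 0"
      using eqs det by simp
    have "\<beta> * ((q \<bullet> f) * (r \<bullet> n) - (q \<bullet> n) * (r \<bullet> f)) =
        (q \<bullet> f) * (\<alpha> * (q \<bullet> n) + \<beta> * (r \<bullet> n)) - (q \<bullet> n) * (\<alpha> * (q \<bullet> f) + \<beta> * (r \<bullet> f))"
      by (simp add: algebra_simps)
    then have "\<beta> = 0"
      using eqs det by simp
    then have "\<gamma> *\<^sub>R z = 0"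
      using comb \<open>\<alpha> = 0\<close> by simp
    then have "\<gamma> = 0"
      using assms(3) by auto
    then show "\<alpha> = 0 \<and> \<beta> = 0 \<and> \<gamma> = 0"
      using \<open>\<alpha> = 0\<close> \<open>\<beta> = 0\<close> by simp
  qed
  moreover have "norm q = 1" "norm r = 1"
    using assms(1,2) W_unit by auto
  ultimately show ?thesis
    using assms(3) by (simp add: sph_indep_def)
qed

lemma plane_dir_between_mem:
  assumes "\<alpha> < \<beta>" "\<beta> - \<alpha> < pi" "\<alpha> \<le> \<gamma>" "\<gamma> \<le> \<beta>"
  shows "plane_dir \<gamma> \<in> convex_cone hull {plane_dir \<alpha>, plane_dir \<beta>}"
proof -
  have "sin (\<beta> - \<alpha>) > 0"
    using assms(1,2) by (simp add: sin_gt_zero)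
  have "sin (\<beta> - \<gamma>) \<ge> 0" "sin (\<gamma> - \<alpha>) \<ge> 0"
    using assms by (auto intro!: sin_ge_zero)
  then have "sin (\<beta> - \<gamma>) *\<^sub>R plane_dir \<alpha> + sin (\<gamma> - \<alpha>) *\<^sub>R plane_dir \<beta>
      \<in> convex_cone hull {plane_dir \<alpha>, plane_dir \<beta>}"
    by (rule mem_convex_cone_hull_two)
  then have "sin (\<beta> - \<alpha>) *\<^sub>R plane_dir \<gamma> \<in> convex_cone hull {plane_dir \<alpha>, plane_dir \<beta>}"
    by (simp only: plane_dir_sine_rule[where \<alpha> = \<alpha> and \<beta> = \<beta>])
  then have "(1 / sin (\<beta> - \<alpha>)) *\<^sub>R (sin (\<beta> - \<alpha>) *\<^sub>R plane_dir \<gamma>)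
      \<in> convex_cone hull {plane_dir \<alpha>, plane_dir \<beta>}"
    by (rule convex_cone_hull_mul) (use \<open>sin (\<beta> - \<alpha>) > 0\<close> in simp)
  then show ?thesis
    using \<open>sin (\<beta> - \<alpha>) > 0\<close> by simp
qed

lemma wedge_generates:
  assumes q: "q \<in> W" "polar_radius q > 0" and r: "r \<in> W" "polar_radius r > 0"
    and angles: "polar_angle q < polar_angle r" "polar_angle r - polar_angle q < pi"
    and extremal: "\<forall>w\<in>W. polar_radius w > 0 \<longrightarrow>
      polar_angle q \<le> polar_angle w \<and> polar_angle w \<le> polar_angle r"
  shows "W \<subseteq> convex_cone hull {p, - p, q, r}"
proof
  let ?K = "convex_cone hull {p, - p, q, r}"
  have line_K: "a *\<^sub>R p \<in> ?K" for a
    unfolding convex_cone_hull_insert_line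
    by (intro CollectI exI[of _ a] exI[of _ 0] conjI) (simp_all add: convex_cone_hull_contains_0)
  have "plane_dir (polar_angle w) \<in> ?K" if "w \<in> {q, r}" for w
    using that q r
    by (intro plane_dir_mem[OF convex_cone_convex_cone_hull line_K] hull_inc normal_inner_nonneg) auto
  then have sector: "convex_cone hull {plane_dir (polar_angle q), plane_dir (polar_angle r)} \<subseteq> ?K"
    by (intro hull_minimal) (simp_all add: convex_cone_convex_cone_hull)
  fix w assume "w \<in> W"
  have "polar_radius w *\<^sub>R plane_dir (polar_angle w) \<in> ?K"
  proof (cases "polar_radius w > 0")
    case True
    then have "polar_angle q \<le> polar_angle w" "polar_angle w \<le> polar_angle r"
      using extremal \<open>w \<in> W\<close> by auto
    then have "plane_dir (polar_angle w) \<in> ?K"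
      by (intro subsetD[OF sector] plane_dir_between_mem[OF angles])
    then show ?thesis
      by (rule convex_cone_hull_mul) (rule polar_radius_nonneg)
  next
    case False
    then have "polar_radius w = 0"
      using polar_radius_nonneg[of w] by linarith
    then show ?thesis
      by (simp add: convex_cone_hull_contains_0)
  qed
  then have "(w \<bullet> p) *\<^sub>R p + polar_radius w *\<^sub>R plane_dir (polar_angle w) \<in> ?K"
    by (intro convex_cone_hull_add line_K)
  with polar_decomposition[OF normal_inner_nonneg[OF \<open>w \<in> W\<close>]] show "w \<in> ?K"
    by (rule ssubst)
qed

lemma two_adjacent_geodesic_triangles_wedge:
  assumes "q \<in> W" "r \<in> W" and det: "(q \<bullet> f) * (r \<bullet> n) - (q \<bullet> n) * (r \<bullet> f) \<noteq> 0"
  shows "two_adjacent_geodesic_triangles (spherical_image (convex_cone hull {p, - p, q, r}))"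
proof -
  have "{p, q, r} = {q, r, p}" "{- p, q, r} = {q, r, - p}"
    by auto
  then have K: "convex_cone hull {p, - p, q, r} = convex_cone hull {q, r, p} \<union> convex_cone hull {q, r, - p}"
    using convex_cone_hull_insert_line_eq_Un[of p "{q, r}"] by (simp only:)
  have indep_p: "sph_indep q r p" and indep_neg_p: "sph_indep q r (- p)"
    using sph_indep_if_det_nonzero[OF assms(1,2) _ _ _ det] norm_p p_f p_n by simp_all
  have "{q, r, p} - {p} = {q, r}"
    using indep_p by (auto simp: sph_indep_def)
  then have "p \<notin> span {q, r}"
    using indep_p unfolding sph_indep_def dependent_def by force
  then obtain m where m: "\<forall>s\<in>{q, r}. m \<bullet> s = 0" "m \<bullet> p > 0"
    by (rule orthogonal_vector_off_span)
  have "spherical_image (convex_cone hull {p, - p, q, r}) = geo_tri q r p \<union> geo_tri q r (- p)"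
    unfolding K spherical_image_Un by (simp add: spherical_image_cone_eq_geo_tri indep_p indep_neg_p)
  then show ?thesis
    unfolding two_adjacent_geodesic_triangles_def using indep_p indep_neg_p m
    by (intro exI[of _ q] exI[of _ r] exI[of _ p] exI[of _ "- p"] exI[of _ m]) simp
qed

lemma interpolation_shape_if_wedge:
  assumes q: "q \<in> W" "polar_radius q > 0" and r: "r \<in> W" "polar_radius r > 0"
    and angles: "polar_angle q < polar_angle r" "polar_angle r - polar_angle q < pi"
    and extremal: "\<forall>w\<in>W. polar_radius w > 0 \<longrightarrow>
      polar_angle q \<le> polar_angle w \<and> polar_angle w \<le> polar_angle r"
  shows "interpolation_shape (spherical_image (convex_cone hull W))"
proof -
  have "{p, - p, q, r} \<subseteq> convex_cone hull W"
    using p_mem neg_p_mem q r by (simp add: hull_inc)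
  then have C: "convex_cone hull W = convex_cone hull {p, - p, q, r}"
    using wedge_generates[OF q r angles extremal] by (intro convex_cone_hull_eqI)
  have "(q \<bullet> f) * (r \<bullet> n) - (q \<bullet> n) * (r \<bullet> f) =
      polar_radius q * polar_radius r * sin (polar_angle r - polar_angle q)"
    using polar_coordinates[OF normal_inner_nonneg[OF q(1)] q(2)] polar_coordinates[OF normal_inner_nonneg[OF r(1)] r(2)]
    by (simp add: sin_diff algebra_simps)
  also have "\<dots> > 0"
    using q(2) r(2) angles by (simp add: sin_gt_zero)
  finally have "(q \<bullet> f) * (r \<bullet> n) - (q \<bullet> n) * (r \<bullet> f) \<noteq> 0"
    by simp
  then show ?thesis
    unfolding C interpolation_shape_def using two_adjacent_geodesic_triangles_wedge[OF q(1) r(1)] by simp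
qed

lemma positive_mem_if_plane_in_cone:
  assumes plane: "\<And>a b. a *\<^sub>R p + b *\<^sub>R f \<in> convex_cone hull W"
  shows "\<exists>c\<in>convex_cone hull W. n \<bullet> c > 0"
proof (rule ccontr)
  assume "\<not> (\<exists>c\<in>convex_cone hull W. n \<bullet> c > 0)"
  then have zero: "n \<bullet> c = 0" if "c \<in> convex_cone hull W" for c
    using that halfspace by force
  have "- c \<in> convex_cone hull W" if "c \<in> convex_cone hull W" for c
  proof -
    have "c = (c \<bullet> p) *\<^sub>R p + (c \<bullet> f) *\<^sub>R f"
      using orthonormal_expansion[of c] zero[OF that] by (simp add: inner_commute)
    then have "- c = (- (c \<bullet> p)) *\<^sub>R p + (- (c \<bullet> f)) *\<^sub>R f"
      by (metis add.inverse_distrib_swap add.commute scaleR_minus_left)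
    then show ?thesis
      using plane by (rule ssubst)
  qed
  then show False
    using not_subspace by (simp add: subspace_convex_cone_symmetric convex_cone_convex_cone_hull)
qed

lemma halfspace_if_plane_in_cone:
  assumes plane: "\<And>a b. a *\<^sub>R p + b *\<^sub>R f \<in> convex_cone hull W"
  shows "convex_cone hull W = {x. n \<bullet> x \<ge> 0}"
proof -
  obtain c where c: "c \<in> convex_cone hull W" "n \<bullet> c > 0"
    using positive_mem_if_plane_in_cone[OF plane] by blast
  have "n \<in> convex_cone hull W"
  proof (rule direction_mem_convex_cone[OF convex_cone_convex_cone_hull])
    show "((c \<bullet> p) *\<^sub>R p + (c \<bullet> f) *\<^sub>R f) + (n \<bullet> c) *\<^sub>R n \<in> convex_cone hull W"
      using orthonormal_expansion[of c] c(1) by (simp add: inner_commute)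
    show "- ((c \<bullet> p) *\<^sub>R p + (c \<bullet> f) *\<^sub>R f) \<in> convex_cone hull W"
      using plane[of "- (c \<bullet> p)" "- (c \<bullet> f)"] by (simp add: algebra_simps)
  qed (fact c(2))
  show ?thesis
  proof (intro equalityI subsetI)
    fix x assume "x \<in> convex_cone hull W"
    then show "x \<in> {x. n \<bullet> x \<ge> 0}"
      using halfspace by simp
  next
    fix x assume "x \<in> {x. n \<bullet> x \<ge> 0}"
    then have "((x \<bullet> p) *\<^sub>R p + (x \<bullet> f) *\<^sub>R f) + (x \<bullet> n) *\<^sub>R n \<in> convex_cone hull W"
      using \<open>n \<in> convex_cone hull W\<close>
      by (intro convex_cone_hull_add plane convex_cone_hull_mul) (simp_all add: inner_commute)
    with orthonormal_expansion[of x] show "x \<in> convex_cone hull W"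
      by (simp only: add.assoc)
  qed
qed

lemma interpolation_shape_if_opposite_directions:
  assumes q: "q \<in> W" "polar_radius q > 0" "polar_angle q = 0"
    and r: "r \<in> W" "polar_radius r > 0" "polar_angle r = pi"
  shows "interpolation_shape (spherical_image (convex_cone hull W))"
proof -
  have "f \<in> convex_cone hull W"
    using plane_dir_mem[OF convex_cone_convex_cone_hull line_mem_cone hull_inc[OF q(1)] q(2) normal_inner_nonneg[OF q(1)]] q(3) by (simp add: plane_dir_def)
  moreover have "- f \<in> convex_cone hull W"
    using plane_dir_mem[OF convex_cone_convex_cone_hull line_mem_cone hull_inc[OF r(1)] r(2) normal_inner_nonneg[OF r(1)]] r(3) by (simp add: plane_dir_def)
  ultimately have "b *\<^sub>R f \<in> convex_cone hull W" for b
    using convex_cone_hull_mul[of f W b] convex_cone_hull_mul[of "- f" W "- b"]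
    by (cases "b \<ge> 0") auto
  then have "a *\<^sub>R p + b *\<^sub>R f \<in> convex_cone hull W" for a b
    by (intro convex_cone_hull_add line_mem_cone)
  then have "convex_cone hull W = {x. n \<bullet> x \<ge> 0}"
    by (rule halfspace_if_plane_in_cone)
  then show ?thesis
    using hemisphere_spherical_image_halfspace[OF norm_n] by (simp add: interpolation_shape_def)
qed

lemma interpolation_shape_cone: "interpolation_shape (spherical_image (convex_cone hull W))"
proof -
  define W' where "W' = {w \<in> W. polar_radius w > 0}"
  have "finite (polar_angle ` W')" "polar_angle ` W' \<noteq> {}"
    using finite_W exists_off_axis_generator by (auto simp: W'_def)
  then obtain q r where "q \<in> W'" "r \<in> W'"
    and "polar_angle q = Min (polar_angle ` W')" "polar_angle r = Max (polar_angle ` W')"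
    by (metis (no_types, lifting) Max_in Min_in imageE)
  then have q: "q \<in> W" "polar_radius q > 0" and r: "r \<in> W" "polar_radius r > 0"
    and extremal: "\<forall>w\<in>W. polar_radius w > 0 \<longrightarrow>
      polar_angle q \<le> polar_angle w \<and> polar_angle w \<le> polar_angle r"
    using \<open>finite (polar_angle ` W')\<close> by (auto simp: W'_def)
  have "0 \<le> polar_angle q" "polar_angle r \<le> pi"
    by (simp_all add: polar_angle_bounds)
  moreover have "polar_angle q \<le> polar_angle r"
    using extremal q by blast
  ultimately consider "polar_angle q = polar_angle r"
    | "polar_angle q < polar_angle r" "polar_angle r - polar_angle q < pi"
    | "polar_angle q = 0" "polar_angle r = pi"
    by linarith
  then show ?thesis
  proof cases
    case 1
    then have "\<forall>w\<in>W. polar_radius w > 0 \<longrightarrow> polar_angle w = polar_angle q"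
      using extremal by fastforce
    then show ?thesis
      by (rule interpolation_shape_if_single_direction[OF q])
  next
    case 2
    then show ?thesis
      by (rule interpolation_shape_if_wedge[OF q r _ _ extremal])
  next
    case 3
    then show ?thesis
      by (rule interpolation_shape_if_opposite_directions[OF q(1,2) _ r(1,2)])
  qed
qed

end

lemma interpolation_shape_antipodal:
  fixes W :: "(real^3) set"
  assumes "finite W" "W \<subseteq> sphere 0 1" "p \<in> W" "- p \<in> W"
    and not_subspace: "\<not> subspace (convex_cone hull W)"
  shows "interpolation_shape (spherical_image (convex_cone hull W))"
proof -
  obtain n where "norm n = 1" and halfspace: "\<forall>c\<in>convex_cone hull W. n \<bullet> c \<ge> 0"
    using convex_cone_in_halfspace[OF closed_convex_cone_hull[OF assms(1)]
        convex_cone_convex_cone_hull not_subspace] .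
  have "n \<bullet> p \<ge> 0"
    by (rule bspec[OF halfspace hull_inc[OF assms(3)]])
  moreover have "n \<bullet> (- p) \<ge> 0"
    by (rule bspec[OF halfspace hull_inc[OF assms(4)]])
  ultimately have "p \<bullet> n = 0"
    by (simp add: inner_commute)
  have "norm p = 1"
    using assms(2,3) by auto
  define f where "f = cross3 n p"
  have "(norm f)\<^sup>2 = 1"
    using norm_cross[of n p] \<open>norm n = 1\<close> \<open>norm p = 1\<close> \<open>p \<bullet> n = 0\<close> by (simp add: f_def inner_commute)
  then have "norm f = 1"
    using norm_ge_zero[of f] by (simp add: power2_eq_1_iff)
  have "p \<bullet> f = 0" "f \<bullet> n = 0"
    using dot_cross_self(2)[of p n] dot_cross_self(4)[of n p] by (simp_all add: f_def)
  interpret antipodal_cone W p f n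
    using assms \<open>norm p = 1\<close> \<open>norm f = 1\<close> \<open>norm n = 1\<close>
      \<open>p \<bullet> f = 0\<close> \<open>p \<bullet> n = 0\<close> \<open>f \<bullet> n = 0\<close> halfspace
    by unfold_locales auto
  show ?thesis
    by (rule interpolation_shape_cone)
qed

lemma interpolation_shape_region_cone:
  assumes "\<epsilon> > 0" "u \<in> SF \<epsilon> \<Omega>" "R \<in> regions \<epsilon> u" "\<not> subspace (coneR \<epsilon> u R)"
  shows "interpolation_shape (spherical_image (coneR \<epsilon> u R))"
proof -
  define W where "W = u ` lattice_in \<epsilon> R"
  have "finite W"
    using assms(4) coneR_infinite[of u \<epsilon> R] subspace_single_0 unfolding W_def by metis
  then have C: "coneR \<epsilon> u R = convex_cone hull W"
    by (simp add: W_def coneR_eq_convex_cone_hull)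
  have "W \<subseteq> sphere 0 1"
    using assms(2) by (auto simp: W_def SF_def lattice_in_def)
  consider p where "p \<in> W" "- p \<in> W" | a b c where "W = {a, b, c}" "\<forall>x\<in>W. \<forall>y\<in>W. x \<noteq> - y"
    using region_values_antipodal_or_three[OF assms(1,3), folded W_def] by blast
  then show ?thesis
  proof cases
    case 1
    then show ?thesis
      unfolding C using \<open>finite W\<close> \<open>W \<subseteq> sphere 0 1\<close> assms(4)[unfolded C]
      by (intro interpolation_shape_antipodal)
  next
    case 2
    then show ?thesis
      unfolding C using \<open>W \<subseteq> sphere 0 1\<close> assms(4)[unfolded C]
      by (simp add: interpolation_shape_three_points)
  qed
qed

theorem lemma5p6:
  fixes \<epsilon> :: real and \<Omega> :: "(real^2) set" and u :: "real^2 \<Rightarrow> real^3"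
    and R :: "(real^2) set" and S :: "(real^3) set"
  assumes "\<epsilon> > 0" and "bounded \<Omega>" and "open \<Omega>"
    and "u \<in> SF \<epsilon> \<Omega>" and "R \<in> regions \<epsilon> u"
    and "admissible_surface \<epsilon> u R S"
  shows "semi_great_circle S \<or> geodesic_arc S \<or> geodesic_triangle S \<or>
         two_adjacent_geodesic_triangles S \<or> hemisphere S"
proof -
  have surface: "cone_surface (coneR \<epsilon> u R) S"
    using assms(6) by (rule cone_surface_if_admissible_surface)
  have "interpolation_shape S"
  proof (cases "subspace (coneR \<epsilon> u R)")
    case True
    then show ?thesis
      using surface by (rule interpolation_shape_if_subspace)
  next
    case False
    then have "S = spherical_image (coneR \<epsilon> u R)"
      using surface by (simp add: cone_surface_def)
    then show ?thesis
      using interpolation_shape_region_cone[OF assms(1,4,5) False] by simp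
  qed
  then show ?thesis
    by (simp add: interpolation_shape_def)
qed

end
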